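(* Let $n\ge1$, $\gamma\in[0,1]$, $\beta=\frac{2}{2-\gamma}$ and $\vartheta>0$. Then there exists $C>0$, depending only on $n,\gamma,\vartheta,\max_{[0,1]}h$ and $C_\circ$, such that for every $\varepsilon>0$, every nonnegative classical solution $u_\varepsilon$ of $\partial_tu_\varepsilon-\Delta u_\varepsilon=-f_\varepsilon(u_\varepsilon)$ in $Q_1$ satisfying $\sup_{Q_1}u_\varepsilon^{2/\beta}+\sup_{Q_1}|\nabla(u_\varepsilon^{1/\beta})|^2\le C_\circ$, every $r\in(0,\frac14)$ and every $(x_\circ,t_\circ)\in\{u_\varepsilon\le\vartheta\varepsilon^\beta\}\cap Q_{1/2}$, $$\sup_{Q_r(x_\circ,t_\circ)}u_\varepsilon\le C(\varepsilon^2+r^2)^{\frac{1}{2-\gamma}}.$$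
   Context: $h:\mathbb{R}\to[0,\infty)$ vanishes outside $[0,1]$, is $C^1$ on $[0,1]$, $h(0)=0$, $h'(0)>0$, $\int_0^1h=1$; $H(u)=\int_0^uh$ for $u>0$, $0$ otherwise; $f_\varepsilon(u)=\varepsilon^{-\beta}h(u/\varepsilon^\beta)u^\gamma+\gamma H(u/\varepsilon^\beta)u^{\gamma-1}$ for $u>0$, $f_\varepsilon(u)=0$ for $u\le0$ (the derivative of $F_\varepsilon(u)=H(u/\varepsilon^\beta)u^\gamma$). $C_\circ>0$ is a given constant. $Q_r(x_\circ,t_\circ)=B_r(x_\circ)\times(t_\circ-r^2,t_\circ+r^2)$, $Q_r=Q_r(0,0)$. *)

theory Defs
  imports "HOL-Analysis.Analysis"
begin

definition admissible_h :: "(real \<Rightarrow> real) \<Rightarrow> bool" where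
  "admissible_h h \<longleftrightarrow>
     (\<forall>s. h s \<ge> 0) \<and> (\<forall>s. s \<notin> {0..1} \<longrightarrow> h s = 0) \<and>
     (\<exists>h'. continuous_on {0..1} h' \<and>
          (\<forall>s\<in>{0..1}. (h has_real_derivative h' s) (at s within {0..1})) \<and>
          h' 0 > 0) \<and>
     h 0 = 0 \<and> integral {0..1} h = 1"

definition Hfun :: "(real \<Rightarrow> real) \<Rightarrow> real \<Rightarrow> real" where
  "Hfun h u = (if u > 0 then integral {0..u} h else 0)"

definition f_eps :: "(real \<Rightarrow> real) \<Rightarrow> real \<Rightarrow> real \<Rightarrow> real \<Rightarrow> real \<Rightarrow> real" where
  "f_eps h \<gamma> \<beta> \<epsilon> u =
     (if u > 0 then \<epsilon> powr (-\<beta>) * h (u / \<epsilon> powr \<beta>) * u powr \<gamma>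
                    + \<gamma> * Hfun h (u / \<epsilon> powr \<beta>) * u powr (\<gamma> - 1)
      else 0)"

definition cyl :: "real \<Rightarrow> real^'n \<Rightarrow> real \<Rightarrow> ((real^'n) \<times> real) set" where
  "cyl r x0 t0 = ball x0 r \<times> {t0 - r^2 <..< t0 + r^2}"

definition classical_solution ::
  "(real \<Rightarrow> real) \<Rightarrow> ((real^'n) \<times> real) set \<Rightarrow> (real^'n \<Rightarrow> real \<Rightarrow> real) \<Rightarrow> bool" where
  "classical_solution F Q u \<longleftrightarrow>
     (\<exists>ut ux uxx.
        continuous_on Q (\<lambda>(x,t). u x t) \<and>
        continuous_on Q (\<lambda>(x,t). ut x t) \<and>
        continuous_on Q (\<lambda>(x,t). ux x t) \<and>
        continuous_on Q (\<lambda>(x,t). uxx x t) \<and>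
        (\<forall>(x,t)\<in>Q.
           ((\<lambda>s. u x s) has_real_derivative ut x t) (at t) \<and>
           ((\<lambda>y. u y t) has_derivative (\<lambda>v. ux x t \<bullet> v)) (at x) \<and>
           ((\<lambda>y. ux y t) has_derivative (\<lambda>v. (uxx x t :: real^'n^'n) *v v)) (at x) \<and>
           ut x t - (\<Sum>i\<in>UNIV. uxx x t $ i $ i) = - F (u x t)))"

end

(* Both halves of the estimate are comparison arguments against explicit radial barriers,
   based on the fact that a strict sub- or supersolution cannot touch a classical solution
   for the first time. Throughout, u^(1/beta) is bounded and Lipschitz in space, and the
   reaction term scales as f_eps(u) = eps^(beta-2) f_1(u / eps^beta) with f_1 bounded by 2 max h
   below 1 and by gamma s^(gamma-1) above.

   Forward in time, u^(1/beta) <= theta^(1/beta) eps + L |x - x0| at time t0, so u stays below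
   the concave supersolution K (eps^2 + (2n+1)(t - t0) + |x - x0|^2)^(beta/2), which gives
   u <= C (eps^2 + r^2)^(beta/2) on Q_r(x0,t0) for t >= t0.

   Backward in time, put rho^2 = eps^2 + r^2. If u(x1,t1) were much larger than rho^beta for
   some t1 < t0, then by the Lipschitz bound u would lie above the subsolution
   eps^beta phi((a rho^2 - (2n+1)(t - t1) - |x - x1|^2) / (rho eps)), a = 2n+3, at time t1 on
   the ball of radius sqrt a rho, hence also at (x0,t0). There the subsolution exceeds theta eps^beta,
   contradicting the smallness of u(x0,t0). *)

theory Submission
  imports Defs
begin

section \<open>Comparison principle\<close>

lemma deriv_nonneg_at_left_max:
  fixes g :: "real \<Rightarrow> real"
  assumes dg: "(g has_real_derivative d) (at t)" and \<eta>: "\<eta> > 0"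
    and local_max: "\<forall>s. t - \<eta> < s \<and> s < t \<longrightarrow> g s \<le> g t"
  shows "d \<ge> 0"
proof (rule ccontr)
  assume "\<not> d \<ge> 0"
  then obtain \<delta> where \<delta>: "\<delta> > 0" "\<forall>h>0. h < \<delta> \<longrightarrow> g t < g (t - h)"
    using DERIV_neg_dec_left[OF dg] by auto
  define h where "h = min \<delta> \<eta> / 2"
  have "g t < g (t - h)" using \<delta> \<eta> by (auto simp: h_def)
  moreover have "g (t - h) \<le> g t" using local_max \<delta> \<eta> by (auto simp: h_def)
  ultimately show False by simp
qed

lemma second_deriv_nonpos_at_max:
  fixes g g' :: "real \<Rightarrow> real"
  assumes \<eta>: "\<eta> > 0"
    and dg: "\<forall>\<theta>. \<bar>\<theta>\<bar> < \<eta> \<longrightarrow> (g has_real_derivative g' \<theta>) (at \<theta>)"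
    and dg': "(g' has_real_derivative d) (at 0)"
    and local_max: "\<forall>\<theta>. \<bar>\<theta>\<bar> < \<eta> \<longrightarrow> g \<theta> \<le> g 0"
  shows "d \<le> 0"
proof (rule ccontr)
  assume "\<not> d \<le> 0"
  hence d: "d > 0" by simp
  have g'0: "g' 0 = 0"
    using DERIV_local_max[of g "g' 0" 0 \<eta>] dg local_max \<eta> by auto
  obtain \<delta> where \<delta>: "\<delta> > 0" "\<forall>h>0. h < \<delta> \<longrightarrow> g' 0 < g' (0 + h)"
    using DERIV_pos_inc_right[OF dg' d] by auto
  define h where "h = min \<delta> \<eta> / 2"
  have h: "0 < h" "h < \<delta>" "h < \<eta>" using \<delta> \<eta> by (auto simp: h_def)
  have "g 0 < g h"
  proof (rule DERIV_pos_imp_increasing_open[OF h(1)])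
    fix x assume "0 < x" "x < h"
    thus "\<exists>y. DERIV g x :> y \<and> y > 0"
      using dg \<delta> h g'0 by (intro exI[of _ "g' x"]) auto
  next
    show "continuous_on {0..h} g"
      using dg h by (intro DERIV_continuous_on[where D = g']) (auto intro: has_field_derivative_at_within)
  qed
  moreover have "g h \<le> g 0" using local_max h by auto
  ultimately show False by simp
qed

lemma has_real_derivative_along_line:
  fixes f :: "real^'n \<Rightarrow> real"
  assumes "(f has_derivative (\<lambda>v. G \<bullet> v)) (at (y + \<theta> *\<^sub>R e))"
  shows "((\<lambda>s. f (y + s *\<^sub>R e)) has_real_derivative (G \<bullet> e)) (at \<theta>)"
proof -
  have "((\<lambda>s. y + s *\<^sub>R e) has_derivative (\<lambda>h. h *\<^sub>R e)) (at \<theta>)"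
    by (auto intro!: derivative_eq_intros)
  from diff_chain_at[OF this assms] show ?thesis
    by (simp add: o_def has_field_derivative_def mult_commute_abs)
qed

lemma has_real_derivative_along_line_inner:
  fixes g :: "real^'n \<Rightarrow> real^'n"
  assumes "(g has_derivative (\<lambda>v. H *v v)) (at y)"
  shows "((\<lambda>s. g (y + s *\<^sub>R e) \<bullet> e) has_real_derivative ((H *v e) \<bullet> e)) (at 0)"
proof -
  have "((\<lambda>s. y + s *\<^sub>R e) has_derivative (\<lambda>h. h *\<^sub>R e)) (at 0)"
    by (auto intro!: derivative_eq_intros)
  hence "((g \<circ> (\<lambda>s. y + s *\<^sub>R e)) has_derivative (\<lambda>v. H *v v) \<circ> (\<lambda>h. h *\<^sub>R e)) (at 0)"
    by (rule diff_chain_at) (simp add: assms)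
  from has_derivative_inner_left[OF this] show ?thesis
    by (simp add: o_def has_field_derivative_def mult_commute_abs matrix_vector_mult_scaleR)
qed

definition has_axis_second_deriv :: "(real^'n \<Rightarrow> real) \<Rightarrow> real^'n \<Rightarrow> 'n \<Rightarrow> real \<Rightarrow> bool" where
  "has_axis_second_deriv f y i d \<longleftrightarrow>
     (\<exists>\<eta>>0. \<exists>f'. (\<forall>\<theta>. \<bar>\<theta>\<bar> < \<eta> \<longrightarrow>
                      ((\<lambda>\<theta>. f (y + \<theta> *\<^sub>R axis i 1)) has_real_derivative f' \<theta>) (at \<theta>)) \<and>
               (f' has_real_derivative d) (at 0))"

text \<open>For \<open>\<zeta> = 1\<close> this says that \<open>w\<close> is a strict subsolution of \<open>w\<^sub>t - \<Delta>w = -F(w)\<close> at \<open>(y, s)\<close>,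
  for \<open>\<zeta> = -1\<close> a strict supersolution.\<close>
definition strict_barrier_at ::
  "real \<Rightarrow> (real \<Rightarrow> real) \<Rightarrow> (real^'n \<Rightarrow> real \<Rightarrow> real) \<Rightarrow> real^'n \<Rightarrow> real \<Rightarrow> bool" where
  "strict_barrier_at \<zeta> F w y s \<longleftrightarrow>
     (\<exists>wt W2. ((\<lambda>s. w y s) has_real_derivative wt) (at s) \<and>
        (\<forall>i. has_axis_second_deriv (\<lambda>y. w y s) y i (W2 i)) \<and>
        \<zeta> * (wt - (\<Sum>i\<in>UNIV. W2 i) + F (w y s)) < 0)"

lemma axis_second_deriv_le_at_touching:
  fixes w u :: "real^'n \<Rightarrow> real" and ux :: "real^'n \<Rightarrow> real^'n"
  assumes w: "has_axis_second_deriv w y i W2"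
    and du: "\<forall>x\<in>ball y \<delta>. (u has_derivative (\<lambda>v. ux x \<bullet> v)) (at x)"
    and dux: "(ux has_derivative (\<lambda>v. H *v v)) (at y)"
    and \<delta>: "0 < \<delta>" and local_max: "\<forall>x\<in>ball y \<delta>. \<zeta> * (w x - u x) \<le> \<zeta> * (w y - u y)"
  shows "\<zeta> * (W2 - H $ i $ i) \<le> 0"
proof -
  define e :: "real^'n" where "e = axis i 1"
  obtain \<eta> w' where w': "\<eta> > 0"
      "\<forall>\<theta>. \<bar>\<theta>\<bar> < \<eta> \<longrightarrow> ((\<lambda>\<theta>. w (y + \<theta> *\<^sub>R e)) has_real_derivative w' \<theta>) (at \<theta>)"
      "(w' has_real_derivative W2) (at 0)"
    using w unfolding has_axis_second_deriv_def e_def by blast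
  have in_ball: "y + \<theta> *\<^sub>R e \<in> ball y \<delta>" if "\<bar>\<theta>\<bar> < \<delta>" for \<theta>
    using that by (simp add: e_def dist_norm)
  show ?thesis
  proof (rule second_deriv_nonpos_at_max[of "min \<eta> \<delta>" "\<lambda>\<theta>. \<zeta> * (w (y + \<theta> *\<^sub>R e) - u (y + \<theta> *\<^sub>R e))"
        "\<lambda>\<theta>. \<zeta> * (w' \<theta> - ux (y + \<theta> *\<^sub>R e) \<bullet> e)"])
    show "\<forall>\<theta>. \<bar>\<theta>\<bar> < min \<eta> \<delta> \<longrightarrow> ((\<lambda>\<theta>. \<zeta> * (w (y + \<theta> *\<^sub>R e) - u (y + \<theta> *\<^sub>R e)))
            has_real_derivative \<zeta> * (w' \<theta> - ux (y + \<theta> *\<^sub>R e) \<bullet> e)) (at \<theta>)"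
    proof (intro allI impI)
      fix \<theta> :: real assume \<theta>: "\<bar>\<theta>\<bar> < min \<eta> \<delta>"
      hence "((\<lambda>s. u (y + s *\<^sub>R e)) has_real_derivative ux (y + \<theta> *\<^sub>R e) \<bullet> e) (at \<theta>)"
        using du in_ball by (intro has_real_derivative_along_line) simp
      thus "((\<lambda>\<theta>. \<zeta> * (w (y + \<theta> *\<^sub>R e) - u (y + \<theta> *\<^sub>R e)))
            has_real_derivative \<zeta> * (w' \<theta> - ux (y + \<theta> *\<^sub>R e) \<bullet> e)) (at \<theta>)"
        using w'(2) \<theta> by (auto intro!: derivative_eq_intros)
    qed
    have "(H *v e) \<bullet> e = H $ i $ i"
      unfolding e_def by (metis cart_eq_inner_axis matrix_vector_mul_component)
    hence "((\<lambda>s. ux (y + s *\<^sub>R e) \<bullet> e) has_real_derivative H $ i $ i) (at 0)"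
      using has_real_derivative_along_line_inner[OF dux, of e] by simp
    thus "((\<lambda>\<theta>. \<zeta> * (w' \<theta> - ux (y + \<theta> *\<^sub>R e) \<bullet> e)) has_real_derivative \<zeta> * (W2 - H $ i $ i)) (at 0)"
      using w'(3) by (auto intro!: derivative_eq_intros)
  qed (use w'(1) \<delta> local_max in_ball in auto)
qed

lemma strict_barrier_cannot_touch:
  fixes u w :: "real^'n \<Rightarrow> real \<Rightarrow> real"
  assumes sol: "classical_solution F Q u"
    and inQ: "\<forall>y\<in>ball ys \<delta>. (y, ts) \<in> Q" and \<delta>: "\<delta> > 0"
    and touch: "w ys ts = u ys ts"
    and below_space: "\<forall>y\<in>ball ys \<delta>. \<zeta> * (w y ts - u y ts) \<le> 0"
    and below_past: "\<forall>s. ts - \<delta> < s \<and> s < ts \<longrightarrow> \<zeta> * (w ys s - u ys s) \<le> 0"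
    and barrier: "strict_barrier_at \<zeta> F w ys ts"
  shows False
proof -
  obtain ut ux uxx where U:
    "\<forall>(x,t)\<in>Q. ((\<lambda>s. u x s) has_real_derivative ut x t) (at t) \<and>
           ((\<lambda>y. u y t) has_derivative (\<lambda>v. ux x t \<bullet> v)) (at x) \<and>
           ((\<lambda>y. ux y t) has_derivative (\<lambda>v. (uxx x t :: real^'n^'n) *v v)) (at x) \<and>
           ut x t - (\<Sum>i\<in>UNIV. uxx x t $ i $ i) = - F (u x t)"
    using sol unfolding classical_solution_def by blast
  obtain wt W2 where W:
    "((\<lambda>s. w ys s) has_real_derivative wt) (at ts)"
    "\<And>i. has_axis_second_deriv (\<lambda>y. w y ts) ys i (W2 i)"
    "\<zeta> * (wt - (\<Sum>i\<in>UNIV. W2 i) + F (w ys ts)) < 0"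
    using barrier unfolding strict_barrier_at_def by blast
  have ysQ: "(ys, ts) \<in> Q" using inQ \<delta> by simp
  note Uys = U[rule_format, OF ysQ]
  have time: "\<zeta> * (wt - ut ys ts) \<ge> 0"
  proof (rule deriv_nonneg_at_left_max[OF _ \<delta>])
    show "((\<lambda>s. \<zeta> * (w ys s - u ys s)) has_real_derivative \<zeta> * (wt - ut ys ts)) (at ts)"
      using W(1) Uys by (auto intro!: derivative_eq_intros)
  qed (use below_past touch in auto)
  have space: "\<zeta> * (W2 i - uxx ys ts $ i $ i) \<le> 0" for i
  proof (rule axis_second_deriv_le_at_touching[OF W(2) _ _ \<delta>])
    show "\<forall>x\<in>ball ys \<delta>. ((\<lambda>y. u y ts) has_derivative (\<lambda>v. ux x ts \<bullet> v)) (at x)"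
      using U inQ by fastforce
  qed (use Uys below_space touch in auto)
  have "\<zeta> * ((\<Sum>i\<in>UNIV. W2 i) - (\<Sum>i\<in>UNIV. uxx ys ts $ i $ i)) \<le> 0"
    using space by (simp add: right_diff_distrib sum_distrib_left sum_mono)
  moreover have "(\<Sum>i\<in>UNIV. uxx ys ts $ i $ i) = ut ys ts + F (w ys ts)"
    using Uys touch by simp
  ultimately show False
    using time W(3) by (smt (verit) distrib_left right_diff_distrib)
qed

lemma first_contact_point:
  fixes Z :: "'a::heine_borel \<Rightarrow> real \<Rightarrow> real"
  assumes cont: "continuous_on (cball xc R \<times> {t1..T}) (\<lambda>(y,s). Z y s)"
    and init: "\<forall>y\<in>cball xc R. Z y t1 < 0"
    and lateral: "\<forall>y s. dist xc y = R \<and> s \<in> {t1..T} \<longrightarrow> Z y s < 0"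
    and y0: "y0 \<in> cball xc R" and s0: "s0 \<in> {t1..T}" and nonneg: "Z y0 s0 \<ge> 0"
  shows "\<exists>ys ts. ys \<in> ball xc R \<and> t1 < ts \<and> ts \<le> T \<and> Z ys ts = 0 \<and>
           (\<forall>y\<in>cball xc R. Z y ts \<le> 0) \<and> (\<forall>s. t1 \<le> s \<and> s < ts \<longrightarrow> Z ys s < 0)"
proof -
  define D where "D = cball xc R \<times> {t1..T}"
  define P where "P = D \<inter> (\<lambda>(y,s). Z y s) -` {0..}"
  have "compact D" unfolding D_def by (intro compact_Times) auto
  moreover have "closed P"
    unfolding P_def D_def by (rule continuous_closed_preimage[OF cont]) (auto intro: closed_Times)
  ultimately have "compact P" by (metis P_def compact_Int_closed inf.absorb_iff2 inf_le1)
  hence "compact (snd ` P)" by (intro compact_continuous_image continuous_on_snd continuous_on_id)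
  moreover have "(y0, s0) \<in> P" using y0 s0 nonneg by (simp add: P_def D_def)
  ultimately obtain ts where ts: "ts \<in> snd ` P" "\<forall>s\<in>snd ` P. ts \<le> s"
    using compact_attains_inf by (metis empty_iff image_eqI snd_conv)
  then obtain ys where ys: "ys \<in> cball xc R" "ts \<in> {t1..T}" "Z ys ts \<ge> 0"
    by (force simp: P_def D_def)
  have before: "Z y s < 0" if "y \<in> cball xc R" "t1 \<le> s" "s < ts" for y s
  proof (rule ccontr)
    assume "\<not> Z y s < 0"
    hence "s \<in> snd ` P" using that ys(2) by (force simp: P_def D_def)
    thus False using ts(2) that(3) by force
  qed
  have "t1 < ts" using init ys by (metis atLeastAtMost_iff linorder_not_le order_antisym)
  have at_ts: "Z y ts \<le> 0" if y: "y \<in> cball xc R" for y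
  proof (rule ccontr)
    assume "\<not> Z y ts \<le> 0"
    have "continuous_on {t1..ts} (\<lambda>s. Z y s)"
      using continuous_on_compose2[OF cont, of "{t1..ts}" "\<lambda>s. (y, s)"] y ys(2)
      by (force intro!: continuous_intros)
    then obtain s where "t1 \<le> s" "s \<le> ts" "Z y s = 0"
      using IVT'[of "\<lambda>s. Z y s" t1 0 ts] init y \<open>t1 < ts\<close> \<open>\<not> Z y ts \<le> 0\<close> by force
    moreover have "s \<noteq> ts" using \<open>Z y s = 0\<close> \<open>\<not> Z y ts \<le> 0\<close> by auto
    ultimately show False using before[OF y] by force
  qed
  have "Z ys ts = 0" using at_ts[OF ys(1)] ys(3) by simp
  moreover have "ys \<in> ball xc R" using lateral ys \<open>Z ys ts = 0\<close> by (force simp: dist_commute)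
  ultimately show ?thesis
    using \<open>t1 < ts\<close> ys(1,2) at_ts before by (intro exI[of _ ys] exI[of _ ts]) auto
qed

lemma comparison_principle:
  fixes u w :: "real^'n \<Rightarrow> real \<Rightarrow> real"
  assumes sol: "classical_solution F Q u" and sub: "cball xc R \<times> {t1..T} \<subseteq> Q" and \<zeta>: "\<zeta> \<noteq> 0"
    and wcont: "continuous_on (cball xc R \<times> {t1..T}) (\<lambda>(y,s). w y s)"
    and init: "\<forall>y\<in>cball xc R. \<zeta> * (w y t1 - u y t1) < 0"
    and lateral: "\<forall>y s. dist xc y = R \<and> s \<in> {t1..T} \<longrightarrow> \<zeta> * (w y s - u y s) < 0"
    and barrier: "\<forall>y s. y \<in> ball xc R \<and> t1 < s \<and> s \<le> T \<and> w y s = u y s \<longrightarrow>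
                    strict_barrier_at \<zeta> F w y s"
  shows "\<forall>y\<in>cball xc R. \<forall>s\<in>{t1..T}. \<zeta> * (w y s - u y s) < 0"
proof (rule ccontr)
  assume "\<not> ?thesis"
  then obtain y0 s0 where y0: "y0 \<in> cball xc R" "s0 \<in> {t1..T}" "\<zeta> * (w y0 s0 - u y0 s0) \<ge> 0"
    by force
  have "continuous_on Q (\<lambda>(y,s). u y s)" using sol unfolding classical_solution_def by blast
  hence "continuous_on (cball xc R \<times> {t1..T}) (\<lambda>(y,s). u y s)" using sub by (rule continuous_on_subset)
  hence "continuous_on (cball xc R \<times> {t1..T}) (\<lambda>(y,s). \<zeta> * (w y s - u y s))"
    using wcont by (auto simp: split_def intro!: continuous_intros)
  then obtain ys ts where C: "ys \<in> ball xc R" "t1 < ts" "ts \<le> T" "\<zeta> * (w ys ts - u ys ts) = 0"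
      "\<forall>y\<in>cball xc R. \<zeta> * (w y ts - u y ts) \<le> 0" "\<forall>s. t1 \<le> s \<and> s < ts \<longrightarrow> \<zeta> * (w ys s - u ys s) < 0"
    using first_contact_point[of xc R t1 T "\<lambda>y s. \<zeta> * (w y s - u y s)"] init lateral y0 by blast
  define \<delta> where "\<delta> = min (R - dist xc ys) (ts - t1)"
  have in_cball: "y \<in> cball xc R" if "y \<in> ball ys \<delta>" for y
    using that dist_triangle[of xc y ys] by (auto simp: \<delta>_def dist_commute)
  show False
  proof (rule strict_barrier_cannot_touch[OF sol, of ys \<delta> ts w \<zeta>])
    show "\<forall>y\<in>ball ys \<delta>. (y, ts) \<in> Q" using in_cball sub C(2,3) by auto
    show "\<delta> > 0" using C(1,2) by (simp add: \<delta>_def)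
    show "w ys ts = u ys ts" using C(4) \<zeta> by simp
    show "strict_barrier_at \<zeta> F w ys ts" using barrier C(1-3) \<zeta> C(4) by simp
  qed (use in_cball C(5,6) in \<open>auto simp: \<delta>_def less_imp_le\<close>)
qed

section \<open>Lipschitz continuity in space\<close>

lemma increment_le_after_last_zero:
  fixes g :: "real \<Rightarrow> real"
  assumes cont: "continuous_on {0..1} g" and nonneg: "\<forall>s\<in>{0..1}. 0 \<le> g s"
    and deriv: "\<forall>s. 0 < s \<and> s < 1 \<and> 0 < g s \<longrightarrow> (\<exists>d. (g has_real_derivative d) (at s) \<and> d \<le> K)"
    and K: "0 \<le> K"
  shows "g 1 \<le> g 0 + K"
proof -
  obtain s0 where s0: "s0 \<in> {0..1}" "g s0 \<le> g 0" "\<forall>s. s0 < s \<and> s \<le> 1 \<longrightarrow> 0 < g s"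
  proof (cases "\<exists>s\<in>{0..1}. g s = 0")
    case True
    define Zs where "Zs = {0..1} \<inter> g -` {0}"
    have "closed Zs" unfolding Zs_def by (rule continuous_closed_preimage[OF cont]) auto
    hence "compact Zs" by (simp add: Zs_def compact_eq_bounded_closed bounded_Int)
    moreover have "Zs \<noteq> {}" using True by (auto simp: Zs_def)
    ultimately obtain m where m: "m \<in> Zs" "\<forall>s\<in>Zs. s \<le> m" using compact_attains_sup by blast
    show ?thesis
    proof (rule that[of m])
      show "\<forall>s. m < s \<and> s \<le> 1 \<longrightarrow> 0 < g s"
      proof (intro allI impI)
        fix s assume s: "m < s \<and> s \<le> 1"
        hence "s \<in> {0..1}" using m(1) by (auto simp: Zs_def)
        moreover have "s \<notin> Zs" using m(2) s by force
        ultimately show "0 < g s" using nonneg by (auto simp: Zs_def order_less_le)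
      qed
    qed (use m nonneg in \<open>auto simp: Zs_def\<close>)
  next
    case False
    have "0 < g s" if "0 < s" "s \<le> 1" for s
      using False nonneg that by (auto simp: order_less_le)
    thus ?thesis using that[of 0] by simp
  qed
  show ?thesis
  proof (cases "s0 = 1")
    case True
    thus ?thesis using s0(2) K by simp
  next
    case False
    hence "s0 < 1" using s0(1) by simp
    have d: "\<exists>d. (g has_real_derivative d) (at s) \<and> d \<le> K" if "s0 < s" "s < 1" for s
      using deriv s0 that by auto
    obtain l \<xi> where mvt: "s0 < \<xi>" "\<xi> < 1" "DERIV g \<xi> :> l" "g 1 - g s0 = (1 - s0) * l"
      using MVT[OF \<open>s0 < 1\<close> continuous_on_subset[OF cont]] d s0(1)
      by (force simp: real_differentiable_def)
    have "l \<le> K" using d[OF mvt(1,2)] mvt(3) DERIV_unique by blast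
    hence "(1 - s0) * l \<le> K"
    proof (cases "0 \<le> l")
      case True
      thus ?thesis using s0(1) \<open>l \<le> K\<close> mult_left_le_one_le[of l "1 - s0"] by simp
    next
      case False
      thus ?thesis using s0(1) K mult_nonneg_nonpos[of "1 - s0" l] by simp
    qed
    thus ?thesis using mvt(4) s0(2) by simp
  qed
qed

lemma powr_lipschitz_in_space:
  fixes u :: "real^'n \<Rightarrow> real \<Rightarrow> real"
  assumes sol: "classical_solution F Q u"
    and S: "convex S" "\<forall>x\<in>S. (x, t) \<in> Q"
    and nonneg: "\<forall>x\<in>S. 0 \<le> u x t"
    and grad: "\<forall>x\<in>S. \<forall>g. 0 < u x t \<and> ((\<lambda>y. u y t powr q) has_derivative (\<lambda>v. g \<bullet> v)) (at x)
                 \<longrightarrow> (norm g)\<^sup>2 \<le> B"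
    and q: "0 < q" and B: "0 \<le> B"
    and y: "y \<in> S" and z: "z \<in> S"
  shows "u z t powr q \<le> u y t powr q + sqrt B * dist y z"
proof -
  obtain ux where ux: "\<forall>(x,t)\<in>Q. ((\<lambda>y. u y t) has_derivative (\<lambda>v. ux x t \<bullet> v)) (at x)"
    using sol unfolding classical_solution_def by blast
  define P where "P = (\<lambda>s::real. y + s *\<^sub>R (z - y))"
  have PS: "P s \<in> S" if "s \<in> {0..1}" for s
    using convexD_alt[OF S(1) y z, of s] that by (simp add: P_def algebra_simps)
  have du: "((\<lambda>y. u y t) has_derivative (\<lambda>v. ux (P s) t \<bullet> v)) (at (P s))" if "s \<in> {0..1}" for s
  proof -
    have "(P s, t) \<in> Q" using S(2) PS[OF that] by blast
    from bspec[OF ux this] show ?thesis by simp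
  qed
  have "continuous_on {0..1} (\<lambda>s. u (P s) t)"
  proof (rule continuous_at_imp_continuous_on, rule ballI)
    fix s :: real assume "s \<in> {0..1}"
    have "isCont P s" unfolding P_def by (intro continuous_intros)
    moreover have "isCont (\<lambda>y. u y t) (P s)" using has_derivative_continuous[OF du[OF \<open>s \<in> {0..1}\<close>]] .
    ultimately show "isCont (\<lambda>s. u (P s) t) s" using isCont_o2 by blast
  qed
  hence cont: "continuous_on {0..1} (\<lambda>s. u (P s) t powr q)"
    by (rule continuous_on_powr'[OF _ continuous_on_const]) (use q nonneg PS in auto)
  have "u (P 1) t powr q \<le> u (P 0) t powr q + sqrt B * dist y z"
  proof (rule increment_le_after_last_zero[OF cont, unfolded o_def])
    show "\<forall>s. 0 < s \<and> s < 1 \<and> 0 < u (P s) t powr q \<longrightarrow>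
      (\<exists>d. ((\<lambda>s. u (P s) t powr q) has_real_derivative d) (at s) \<and> d \<le> sqrt B * dist y z)"
    proof (intro allI impI)
      fix s assume s: "0 < s \<and> s < 1 \<and> 0 < u (P s) t powr q"
      hence pos: "0 < u (P s) t" using nonneg PS[of s] by (auto simp: order_less_le)
      define G where "G = (q * u (P s) t powr (q - 1)) *\<^sub>R ux (P s) t"
      have "((\<lambda>r. r powr q) has_derivative (\<lambda>h. q * u (P s) t powr (q - 1) * h)) (at (u (P s) t))"
        using has_real_derivative_powr[OF pos, of q] by (simp add: has_field_derivative_def)
      from diff_chain_at[OF du this] s
      have dG: "((\<lambda>y. u y t powr q) has_derivative (\<lambda>v. G \<bullet> v)) (at (P s))"
        by (simp add: o_def G_def)
      have "norm G \<le> sqrt B"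
        using grad PS[of s] s pos dG by (auto intro: real_le_rsqrt)
      hence "G \<bullet> (z - y) \<le> sqrt B * dist y z"
        using norm_cauchy_schwarz[of G "z - y"] mult_right_mono[of "norm G" "sqrt B" "norm (z - y)"]
        by (simp add: dist_norm norm_minus_commute)
      moreover have "((\<lambda>s. u (P s) t powr q) has_real_derivative G \<bullet> (z - y)) (at s)"
        using has_real_derivative_along_line[of "\<lambda>y. u y t powr q" G y s "z - y"] dG
        by (simp add: P_def)
      ultimately show "\<exists>d. ((\<lambda>s. u (P s) t powr q) has_real_derivative d) (at s) \<and> d \<le> sqrt B * dist y z"
        by blast
    qed
  qed (use B nonneg PS in auto)
  thus ?thesis by (simp add: P_def)
qed

section \<open>Radial barriers\<close>

lemma power2_norm_add_axis:
  fixes a :: "real^'n"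
  shows "(norm (a + \<theta> *\<^sub>R axis i 1))\<^sup>2 = (norm a)\<^sup>2 + 2 * \<theta> * a $ i + \<theta>\<^sup>2"
proof -
  have "(norm (a + \<theta> *\<^sub>R axis i 1))\<^sup>2 = (a + \<theta> *\<^sub>R axis i 1) \<bullet> (a + \<theta> *\<^sub>R axis i 1)"
    by (simp add: power2_norm_eq_inner)
  also have "\<dots> = a \<bullet> a + 2 * \<theta> * (a \<bullet> axis i 1) + \<theta>\<^sup>2 * (axis i 1 \<bullet> axis i (1::real))"
    by (simp add: inner_add_left inner_add_right inner_commute power2_eq_square algebra_simps)
  also have "\<dots> = (norm a)\<^sup>2 + 2 * \<theta> * a $ i + \<theta>\<^sup>2"
    by (simp add: power2_norm_eq_inner inner_axis inner_axis_axis)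
  finally show ?thesis .
qed

lemma radial_axis_second_deriv:
  fixes \<Phi> \<Phi>' :: "real \<Rightarrow> real" and xc y :: "real^'n"
  assumes \<eta>: "\<eta> > 0"
    and d\<Phi>: "\<forall>z. \<bar>z - z0\<bar> < \<eta> \<longrightarrow> (\<Phi> has_real_derivative \<Phi>' z) (at z)"
    and d\<Phi>': "(\<Phi>' has_real_derivative \<Phi>'') (at z0)"
    and z0: "z0 = \<alpha> + \<sigma> * (norm (y - xc))\<^sup>2"
  shows "has_axis_second_deriv (\<lambda>y. \<Phi> (\<alpha> + \<sigma> * (norm (y - xc))\<^sup>2)) y i
           (4 * \<sigma>\<^sup>2 * ((y - xc) $ i)\<^sup>2 * \<Phi>'' + 2 * \<sigma> * \<Phi>' z0)"
proof -
  define b where "b = (y - xc) $ i"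
  define g where "g = (\<lambda>\<theta>::real. z0 + \<sigma> * (2 * \<theta> * b + \<theta>\<^sup>2))"
  have g_eq: "\<alpha> + \<sigma> * (norm (y + \<theta> *\<^sub>R axis i 1 - xc))\<^sup>2 = g \<theta>" for \<theta>
  proof -
    have "y + \<theta> *\<^sub>R axis i 1 - xc = (y - xc) + \<theta> *\<^sub>R axis i 1" by simp
    hence "(norm (y + \<theta> *\<^sub>R axis i 1 - xc))\<^sup>2 = (norm (y - xc))\<^sup>2 + 2 * \<theta> * b + \<theta>\<^sup>2"
      by (simp only: power2_norm_add_axis b_def)
    thus ?thesis by (simp add: g_def z0 algebra_simps)
  qed
  have dg: "(g has_real_derivative \<sigma> * (2 * b + 2 * \<theta>)) (at \<theta>)" for \<theta>
    unfolding g_def by (auto intro!: derivative_eq_intros simp: algebra_simps)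
  have "g \<midarrow>0\<rightarrow> z0" using DERIV_isCont[OF dg[of 0]] by (simp add: isCont_def g_def)
  then obtain \<eta>' where \<eta>': "\<eta>' > 0" "\<And>\<theta>. \<theta> \<noteq> 0 \<Longrightarrow> \<bar>\<theta>\<bar> < \<eta>' \<Longrightarrow> \<bar>g \<theta> - z0\<bar> < \<eta>"
    using \<eta> unfolding LIM_eq by (metis diff_zero real_norm_def)
  have close: "\<bar>g \<theta> - z0\<bar> < \<eta>" if "\<bar>\<theta>\<bar> < \<eta>'" for \<theta>
    using \<eta>'(2)[of \<theta>] that \<eta> by (cases "\<theta> = 0") (simp_all add: g_def)
  show ?thesis
    unfolding has_axis_second_deriv_def
  proof (intro exI[of _ \<eta>'] exI[of _ "\<lambda>\<theta>. \<Phi>' (g \<theta>) * (\<sigma> * (2 * b + 2 * \<theta>))"] conjI allI impI)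
    fix \<theta> :: real assume "\<bar>\<theta>\<bar> < \<eta>'"
    from DERIV_chain2[OF d\<Phi>[rule_format, OF close[OF this]] dg]
    show "((\<lambda>\<theta>. \<Phi> (\<alpha> + \<sigma> * (norm (y + \<theta> *\<^sub>R axis i 1 - xc))\<^sup>2)) has_real_derivative
            \<Phi>' (g \<theta>) * (\<sigma> * (2 * b + 2 * \<theta>))) (at \<theta>)"
      by (simp add: g_eq)
  next
    have "(\<Phi>' has_real_derivative \<Phi>'') (at (g 0))" using d\<Phi>' by (simp add: g_def)
    from DERIV_chain2[OF this dg[of 0]]
    have A: "((\<lambda>\<theta>. \<Phi>' (g \<theta>)) has_real_derivative \<Phi>'' * (\<sigma> * (2 * b))) (at 0)" by simp
    have B: "((\<lambda>\<theta>. \<sigma> * (2 * b + 2 * \<theta>)) has_real_derivative 2 * \<sigma>) (at 0)"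
      by (auto intro!: derivative_eq_intros)
    show "((\<lambda>\<theta>. \<Phi>' (g \<theta>) * (\<sigma> * (2 * b + 2 * \<theta>))) has_real_derivative
            4 * \<sigma>\<^sup>2 * ((y - xc) $ i)\<^sup>2 * \<Phi>'' + 2 * \<sigma> * \<Phi>' z0) (at 0)"
      by (rule DERIV_cong[OF DERIV_mult[OF A B]])
         (simp add: g_def b_def power2_eq_square algebra_simps)
  qed (fact \<eta>'(1))
qed

lemma radial_strict_barrier:
  fixes \<Phi> \<Phi>' :: "real \<Rightarrow> real" and xc y :: "real^'n"
  assumes \<eta>: "\<eta> > 0"
    and d\<Phi>: "\<forall>z. \<bar>z - z0\<bar> < \<eta> \<longrightarrow> (\<Phi> has_real_derivative \<Phi>' z) (at z)"
    and d\<Phi>': "(\<Phi>' has_real_derivative \<Phi>'') (at z0)"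
    and z0: "z0 = \<alpha> + \<tau> * s + \<sigma> * (norm (y - xc))\<^sup>2"
    and ineq: "\<zeta> * (\<Phi>' z0 * \<tau> - (4 * \<sigma>\<^sup>2 * (norm (y - xc))\<^sup>2 * \<Phi>'' + 2 * real CARD('n) * \<sigma> * \<Phi>' z0)
                 + F (\<Phi> z0)) < 0"
  shows "strict_barrier_at \<zeta> F (\<lambda>y s. \<Phi> (\<alpha> + \<tau> * s + \<sigma> * (norm (y - xc))\<^sup>2)) y s"
proof -
  have "((\<lambda>s. \<alpha> + \<tau> * s + \<sigma> * (norm (y - xc))\<^sup>2) has_real_derivative \<tau>) (at s)"
    by (auto intro!: derivative_eq_intros)
  from DERIV_chain2[OF _ this] d\<Phi> \<eta> z0
  have time: "((\<lambda>s. \<Phi> (\<alpha> + \<tau> * s + \<sigma> * (norm (y - xc))\<^sup>2)) has_real_derivative \<Phi>' z0 * \<tau>) (at s)"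
    by simp
  have space: "has_axis_second_deriv (\<lambda>y. \<Phi> (\<alpha> + \<tau> * s + \<sigma> * (norm (y - xc))\<^sup>2)) y i
                 (4 * \<sigma>\<^sup>2 * ((y - xc) $ i)\<^sup>2 * \<Phi>'' + 2 * \<sigma> * \<Phi>' z0)" for i
    by (rule radial_axis_second_deriv[OF \<eta> d\<Phi> d\<Phi>']) (simp add: z0)
  have "(\<Sum>i\<in>UNIV. 4 * \<sigma>\<^sup>2 * (v $ i)\<^sup>2 * \<Phi>'' + 2 * \<sigma> * \<Phi>' z0) =
          4 * \<sigma>\<^sup>2 * (norm v)\<^sup>2 * \<Phi>'' + 2 * real CARD('n) * \<sigma> * \<Phi>' z0" for v :: "real^'n"
  proof -
    have "(norm v)\<^sup>2 = (\<Sum>i\<in>UNIV. (v $ i)\<^sup>2)"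
      unfolding power2_norm_eq_inner inner_vec_def by (simp add: power2_eq_square)
    thus ?thesis by (simp add: sum.distrib sum_distrib_left sum_distrib_right mult_ac)
  qed
  hence "\<zeta> * (\<Phi>' z0 * \<tau> - (\<Sum>i\<in>UNIV. 4 * \<sigma>\<^sup>2 * ((y - xc) $ i)\<^sup>2 * \<Phi>'' + 2 * \<sigma> * \<Phi>' z0)
           + F (\<Phi> (\<alpha> + \<tau> * s + \<sigma> * (norm (y - xc))\<^sup>2))) < 0"
    unfolding z0[symmetric] using ineq by presburger
  thus ?thesis
    unfolding strict_barrier_at_def using time space
    by (intro exI[of _ "\<Phi>' z0 * \<tau>"] exI[of _ "\<lambda>i. 4 * \<sigma>\<^sup>2 * ((y - xc) $ i)\<^sup>2 * \<Phi>'' + 2 * \<sigma> * \<Phi>' z0"])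
       simp
qed

section \<open>The reaction term\<close>

lemma admissible_h_continuous:
  assumes "admissible_h h" shows "continuous_on {0..1} h"
proof -
  obtain h' where "\<forall>s\<in>{0..1}. (h has_real_derivative h' s) (at s within {0..1})"
    using assms unfolding admissible_h_def by blast
  thus ?thesis unfolding continuous_on_eq_continuous_within using DERIV_continuous by blast
qed

lemma admissible_h_le_sup:
  assumes "admissible_h h" "s \<in> {0..1::real}"
  shows "h s \<le> (SUP s\<in>{0..1}. h s)"
proof (rule cSUP_upper[OF assms(2)])
  have "compact (h ` {0..1})"
    by (rule compact_continuous_image[OF admissible_h_continuous[OF assms(1)]]) auto
  thus "bdd_above (h ` {0..1})" by (rule compact_imp_bounded[THEN bounded_imp_bdd_above])
qed

lemma admissible_h_sup_nonneg:
  assumes "admissible_h h" shows "0 \<le> (SUP s\<in>{0..1}. h s)"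
  using admissible_h_le_sup[OF assms, of 0] assms unfolding admissible_h_def by force

lemma Hfun_nonneg:
  assumes "admissible_h h" shows "0 \<le> Hfun h s"
proof -
  have "\<forall>x. 0 \<le> h x" using assms unfolding admissible_h_def by blast
  thus ?thesis
    by (cases "h integrable_on {0..s}") (auto simp: Hfun_def integral_nonneg not_integrable_integral)
qed

lemma Hfun_le_linear:
  assumes "admissible_h h" "0 < s" "s \<le> 1"
  shows "Hfun h s \<le> (SUP s\<in>{0..1}. h s) * s"
proof -
  have "h integrable_on {0..s}"
    using continuous_on_subset[OF admissible_h_continuous[OF assms(1)]] assms(3)
    by (intro integrable_continuous_real) auto
  hence "integral {0..s} h \<le> integral {0..s} (\<lambda>_. SUP s\<in>{0..1}. h s)"
    by (rule integral_le) (use admissible_h_le_sup[OF assms(1)] assms in auto)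
  thus ?thesis using assms by (simp add: Hfun_def mult.commute)
qed

lemma Hfun_eq_one:
  assumes "admissible_h h" "1 < s"
  shows "Hfun h s = 1"
proof -
  have vanish: "\<forall>x. x \<notin> {0..1} \<longrightarrow> h x = 0" and "integral {0..1} h = 1"
    using assms(1) unfolding admissible_h_def by blast+
  have "integral {0..s} h = integral {0..s} (\<lambda>x. if x \<in> {0..1} then h x else 0)"
    by (rule integral_cong) (use vanish in auto)
  also have "\<dots> = integral ({0..1} \<inter> {0..s}) h" by (rule integral_restrict_Int)
  also have "{0..1} \<inter> {0..s} = {0..1::real}" using assms(2) by auto
  finally show ?thesis using assms(2) \<open>integral {0..1} h = 1\<close> by (simp add: Hfun_def)
qed

lemma f_eps_nonneg:
  assumes "admissible_h h" "0 \<le> \<gamma>"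
  shows "0 \<le> f_eps h \<gamma> \<beta> \<epsilon> u"
proof -
  have "0 \<le> h x" for x using assms unfolding admissible_h_def by blast
  thus ?thesis unfolding f_eps_def using Hfun_nonneg[OF assms(1)] assms(2)
    by (auto intro!: add_nonneg_nonneg mult_nonneg_nonneg)
qed

lemma f_eps_rescale:
  assumes "\<beta> * (\<gamma> - 1) = \<beta> - 2" "0 < \<epsilon>"
  shows "f_eps h \<gamma> \<beta> \<epsilon> u = \<epsilon> powr (\<beta> - 2) * f_eps h \<gamma> \<beta> 1 (u / \<epsilon> powr \<beta>)"
proof (cases "0 < u")
  case True
  define \<sigma> where "\<sigma> = u / \<epsilon> powr \<beta>"
  have "0 < \<sigma>" using True assms(2) by (simp add: \<sigma>_def)
  have u: "u = \<sigma> * \<epsilon> powr \<beta>" using assms(2) by (simp add: \<sigma>_def)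
  have e: "\<beta> * \<gamma> - \<beta> = \<beta> - 2" "\<gamma> * \<beta> - \<beta> = \<beta> - 2" using assms(1) by (simp_all add: algebra_simps)
  have "\<epsilon> powr (-\<beta>) * u powr \<gamma> = \<epsilon> powr (\<beta> - 2) * \<sigma> powr \<gamma>"
    using \<open>0 < \<sigma>\<close> assms
    by (simp add: u powr_mult powr_powr powr_add[symmetric] algebra_simps e)
  moreover have "u powr (\<gamma> - 1) = \<epsilon> powr (\<beta> - 2) * \<sigma> powr (\<gamma> - 1)"
    using \<open>0 < \<sigma>\<close> assms by (simp add: u powr_mult powr_powr algebra_simps e)
  ultimately show ?thesis
    using True \<open>0 < \<sigma>\<close> by (simp add: f_eps_def \<sigma>_def[symmetric] algebra_simps)
qed (use assms(2) in \<open>simp add: f_eps_def zero_less_divide_iff\<close>)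

text \<open>Bound for the rescaled reaction term \<open>f\<^sub>1(\<sigma>) = h(\<sigma>) \<sigma>\<^sup>\<gamma> + \<gamma> H(\<sigma>) \<sigma>\<^sup>\<gamma>\<^sup>-\<^sup>1\<close>:
  for \<open>\<sigma> > 1\<close> only the second summand survives, with \<open>H(\<sigma>) = 1\<close>.\<close>
definition reaction_bound :: "real \<Rightarrow> real \<Rightarrow> real \<Rightarrow> real" where
  "reaction_bound M \<gamma> \<sigma> = (if \<sigma> \<le> 1 then 2 * M else \<gamma> * \<sigma> powr (\<gamma> - 1))"

lemma f_eps_one_le_reaction_bound:
  assumes adm: "admissible_h h" and \<gamma>: "0 \<le> \<gamma>" "\<gamma> \<le> 1" and \<sigma>: "0 \<le> \<sigma>"
  shows "f_eps h \<gamma> \<beta> 1 \<sigma> \<le> reaction_bound (SUP s\<in>{0..1}. h s) \<gamma> \<sigma>"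
proof -
  define M where "M = (SUP s\<in>{0..1}. h s)"
  have M: "0 \<le> M" unfolding M_def by (rule admissible_h_sup_nonneg[OF adm])
  show ?thesis
  proof (cases "\<sigma> \<le> 1")
    case small: True
    show ?thesis
    proof (cases "\<sigma> = 0")
      case False
      hence "0 < \<sigma>" using \<sigma> by simp
      have s\<gamma>: "\<sigma> powr \<gamma> \<le> 1" using small \<sigma> \<gamma> by (intro powr_le1) auto
      have "h \<sigma> \<le> M" using admissible_h_le_sup[OF adm] small \<sigma> by (simp add: M_def)
      moreover have "0 \<le> h \<sigma>" using adm unfolding admissible_h_def by blast
      ultimately have "h \<sigma> * \<sigma> powr \<gamma> \<le> M" by (meson mult_left_le order_trans s\<gamma>)
      moreover have "Hfun h \<sigma> * \<sigma> powr (\<gamma> - 1) \<le> M"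
      proof -
        have "Hfun h \<sigma> * \<sigma> powr (\<gamma> - 1) \<le> M * \<sigma> * \<sigma> powr (\<gamma> - 1)"
          using Hfun_le_linear[OF adm \<open>0 < \<sigma>\<close> small] by (intro mult_right_mono) (auto simp: M_def)
        also have "\<dots> = M * \<sigma> powr \<gamma>" using \<open>0 < \<sigma>\<close> by (simp add: powr_diff mult.assoc)
        also have "\<dots> \<le> M" using s\<gamma> M by (simp add: mult_left_le)
        finally show ?thesis .
      qed
      moreover have "0 \<le> Hfun h \<sigma> * \<sigma> powr (\<gamma> - 1)" using Hfun_nonneg[OF adm] by simp
      ultimately have "h \<sigma> * \<sigma> powr \<gamma> + \<gamma> * (Hfun h \<sigma> * \<sigma> powr (\<gamma> - 1)) \<le> 2 * M"
        using \<gamma> mult_left_le_one_le[of "Hfun h \<sigma> * \<sigma> powr (\<gamma> - 1)" \<gamma>] by linarith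
      thus ?thesis using \<open>0 < \<sigma>\<close> small by (simp add: f_eps_def reaction_bound_def M_def mult.assoc)
    qed (use M in \<open>simp add: f_eps_def reaction_bound_def M_def\<close>)
  next
    case False
    have "h \<sigma> = 0" using adm False unfolding admissible_h_def by auto
    thus ?thesis using False Hfun_eq_one[OF adm] by (simp add: f_eps_def reaction_bound_def)
  qed
qed

section \<open>The profile of the backward subsolution\<close>

text \<open>The exponential part vanishes at \<open>S = 0\<close> and has second derivative \<open>B e\<^sup>-\<^sup>S\<close>; it supplies
  the convexity that absorbs the reaction term for \<open>S \<le> 1\<close>, while the power part dominates
  for large \<open>S\<close>.\<close>
definition sub_profile :: "real \<Rightarrow> real \<Rightarrow> real \<Rightarrow> real \<Rightarrow> real" where
  "sub_profile A B p S = A * ((1 + S) powr p - 1) + B * (2 * S - 1 + exp (- S))"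

definition sub_profile' :: "real \<Rightarrow> real \<Rightarrow> real \<Rightarrow> real \<Rightarrow> real" where
  "sub_profile' A B p S = A * (p * (1 + S) powr (p - 1)) + B * (2 - exp (- S))"

definition sub_profile'' :: "real \<Rightarrow> real \<Rightarrow> real \<Rightarrow> real \<Rightarrow> real" where
  "sub_profile'' A B p S = A * (p * ((p - 1) * (1 + S) powr (p - 2))) + B * exp (- S)"

lemma has_real_derivative_sub_profile:
  assumes "S > -1"
  shows "(sub_profile A B p has_real_derivative sub_profile' A B p S) (at S)"
proof -
  have "((\<lambda>S. (1 + S) powr p) has_real_derivative p * (1 + S) powr (p - 1)) (at S)"
    using assms by (auto intro!: derivative_eq_intros)
  thus ?thesis unfolding sub_profile_def[abs_def] sub_profile'_def
    using assms by (auto intro!: derivative_eq_intros)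
qed

lemma has_real_derivative_sub_profile':
  assumes "S > -1"
  shows "(sub_profile' A B p has_real_derivative sub_profile'' A B p S) (at S)"
proof -
  have "((\<lambda>S. (1 + S) powr (p - 1)) has_real_derivative (p - 1) * (1 + S) powr (p - 2)) (at S)"
    using assms by (auto intro!: derivative_eq_intros simp: diff_diff_add)
  thus ?thesis unfolding sub_profile'_def[abs_def] sub_profile''_def
    using assms by (auto intro!: derivative_eq_intros)
qed

lemma powr_one_plus_ge:
  fixes p S :: real
  assumes "1 \<le> p" "0 \<le> S"
  shows "1 + S powr p \<le> (1 + S) powr p"
proof -
  have "1 + S powr p = 1 + S * S powr (p - 1)"
    using assms by (cases "S = 0") (auto simp: powr_mult_base)
  also have "\<dots> \<le> (1 + S) powr (p - 1) + S * (1 + S) powr (p - 1)"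
    using assms by (intro add_mono ge_one_powr_ge_zero mult_left_mono powr_mono2) auto
  also have "\<dots> = (1 + S) powr p"
    using assms powr_mult_base[of "1 + S" "p - 1"] by (simp add: algebra_simps)
  finally show ?thesis .
qed

lemma sub_profile_ge:
  assumes "1 \<le> p" "0 \<le> S" "0 \<le> A" "0 \<le> B"
  shows "A * S powr p \<le> sub_profile A B p S"
proof -
  have "A * S powr p \<le> A * ((1 + S) powr p - 1)"
    using powr_one_plus_ge[OF assms(1,2)] assms by (intro mult_left_mono) auto
  moreover have "0 \<le> B * (2 * S - 1 + exp (- S))"
    using exp_ge_add_one_self[of "- S"] assms by (intro mult_nonneg_nonneg) auto
  ultimately show ?thesis unfolding sub_profile_def by linarith
qed

lemma sub_profile_neg:
  assumes "0 < p" "-1/2 \<le> S" "S < 0" "0 < A" "0 < B"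
  shows "sub_profile A B p S < 0"
proof -
  have "(1 + S) powr p < 1 powr p"
    using assms by (intro powr_less_mono2) auto
  hence "A * ((1 + S) powr p - 1) < 0" using assms by (simp add: mult_pos_neg)
  moreover have "2 * S - 1 + exp (- S) < 0"
  proof -
    have "exp (- S) \<le> 1 + (- S) + (- S)\<^sup>2" using assms by (intro exp_bound) auto
    moreover have "(- S) * (- S) < (- S) * 1" using assms by (intro mult_strict_left_mono) auto
    ultimately show ?thesis by (simp add: power2_eq_square)
  qed
  hence "B * (2 * S - 1 + exp (- S)) < 0" using assms by (simp add: mult_pos_neg)
  ultimately show ?thesis unfolding sub_profile_def by simp
qed

lemma sub_profile_le:
  assumes "0 \<le> S" "0 \<le> A" "0 \<le> B"
  shows "sub_profile A B p S \<le> A * (1 + S) powr p + 2 * B * S"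
proof -
  have "B * (2 * S - 1 + exp (- S)) \<le> B * (2 * S)"
    using assms by (intro mult_left_mono) auto
  thus ?thesis using assms unfolding sub_profile_def by (simp add: algebra_simps)
qed

lemma sub_profile'_ge:
  assumes "1 \<le> p" "0 \<le> S" "0 \<le> A" "0 \<le> B"
  shows "A * S powr (p - 1) \<le> sub_profile' A B p S"
proof -
  have "S powr (p - 1) \<le> (1 + S) powr (p - 1)" using assms by (intro powr_mono2) auto
  also have "\<dots> \<le> p * (1 + S) powr (p - 1)" using assms by (simp add: mult_le_cancel_right1)
  finally have "A * S powr (p - 1) \<le> A * (p * (1 + S) powr (p - 1))"
    using assms by (intro mult_left_mono) auto
  moreover have "0 \<le> B * (2 - exp (- S))"
  proof -
    have "exp (- S) \<le> 1" using assms by simp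
    hence "0 \<le> 2 - exp (- S)" by linarith
    thus ?thesis using assms by simp
  qed
  ultimately show ?thesis unfolding sub_profile'_def by linarith
qed

lemma sub_profile'_pos:
  assumes "1 \<le> p" "0 \<le> S" "0 < A" "0 \<le> B"
  shows "0 < sub_profile' A B p S"
proof -
  have "0 < A * (p * (1 + S) powr (p - 1))" using assms by simp
  moreover have "0 \<le> B * (2 - exp (- S))"
  proof -
    have "exp (- S) \<le> 1" using assms by simp
    hence "0 \<le> 2 - exp (- S)" by linarith
    thus ?thesis using assms by simp
  qed
  ultimately show ?thesis unfolding sub_profile'_def by linarith
qed

lemma reaction_bound_le_power:
  assumes \<gamma>: "0 \<le> \<gamma>" "\<gamma> \<le> 1" and p: "p = 2 / (2 - \<gamma>)" and A: "1 \<le> A" and S: "0 \<le> S"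
    and v: "A * S powr p \<le> v" and big: "1 < A * S powr p"
  shows "reaction_bound M \<gamma> v \<le> \<gamma> * S powr (p - 2)"
proof -
  have "v powr (\<gamma> - 1) \<le> (A * S powr p) powr (\<gamma> - 1)"
    using \<gamma> big v by (intro powr_mono2') auto
  also have "\<dots> = A powr (\<gamma> - 1) * S powr (p - 2)"
  proof -
    have "p * (\<gamma> - 1) = p - 2" using \<gamma> p by (simp add: field_simps)
    thus ?thesis by (simp add: powr_mult powr_powr)
  qed
  also have "\<dots> \<le> S powr (p - 2)"
    using powr_mono[of "\<gamma> - 1" 0 A] A \<gamma> by (intro mult_left_le_one_le) auto
  finally show ?thesis
    using big v \<gamma> by (simp add: reaction_bound_def mult_left_mono)
qed

lemma sub_profile''_ge_reaction_bound:
  assumes \<gamma>: "0 \<le> \<gamma>" "\<gamma> \<le> 1" and p: "p = 2 / (2 - \<gamma>)" and A: "4 \<le> A"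
    and B: "3 * (2 * M + 1) \<le> B" and M: "0 \<le> M" and S: "0 \<le> S"
  shows "reaction_bound M \<gamma> (sub_profile A B p S) \<le> sub_profile'' A B p S"
proof -
  have p1: "1 \<le> p" "p \<le> 2" unfolding p using \<gamma> by (auto simp: le_divide_eq divide_le_eq)
  have power_part: "0 \<le> A * (p * ((p - 1) * (1 + S) powr (p - 2)))"
    using A p1 S by (intro mult_nonneg_nonneg) auto
  show ?thesis
  proof (cases "S \<le> 1")
    case True
    have "reaction_bound M \<gamma> v \<le> 2 * M + 1" for v
    proof (cases "v \<le> 1")
      case False
      hence "v powr (\<gamma> - 1) \<le> 1" using powr_mono[of "\<gamma> - 1" 0 v] \<gamma> by simp
      thus ?thesis using \<gamma> False M mult_mono[of \<gamma> 1 "v powr (\<gamma> - 1)" 1]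
        by (simp add: reaction_bound_def)
    qed (simp add: reaction_bound_def)
    also have "2 * M + 1 \<le> B * (1 / 3)" using B by simp
    also have "\<dots> \<le> B * exp (- 1)"
    proof -
      have "inverse 3 \<le> inverse (exp (1::real))" using exp_le by (intro le_imp_inverse_le) auto
      thus ?thesis using B M by (intro mult_left_mono) (auto simp: exp_minus inverse_eq_divide)
    qed
    also have "\<dots> \<le> B * exp (- S)" using True B M by (intro mult_left_mono) auto
    also have "\<dots> \<le> sub_profile'' A B p S" using power_part by (simp add: sub_profile''_def)
    finally show ?thesis .
  next
    case False
    have "1 \<le> S powr p" using False p1 by (intro ge_one_powr_ge_zero) auto
    hence big: "1 < A * S powr p" using mult_mono[of 4 A 1 "S powr p"] A by simp
    have "reaction_bound M \<gamma> (sub_profile A B p S) \<le> \<gamma> * S powr (p - 2)"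
      by (rule reaction_bound_le_power[OF \<gamma> p _ S sub_profile_ge big]) (use A B M p1 S in auto)
    also have "\<dots> \<le> A * (p * ((p - 1) * (1 + S) powr (p - 2)))"
    proof -
      have "\<gamma> / 2 \<le> p - 1"
        using \<gamma> by (simp add: p field_simps divide_le_eq)
      moreover have "S powr (p - 2) / 2 \<le> (1 + S) powr (p - 2)"
      proof -
        have "1 / 2 \<le> 2 powr (p - 2)" using powr_mono[of "-1" "p - 2" 2] p1 by (simp add: powr_minus)
        hence "S powr (p - 2) / 2 \<le> 2 powr (p - 2) * S powr (p - 2)"
          using mult_right_mono[of "1 / 2" "2 powr (p - 2)" "S powr (p - 2)"] by simp
        also have "\<dots> = (2 * S) powr (p - 2)" by (simp add: powr_mult)
        also have "\<dots> \<le> (1 + S) powr (p - 2)" using p1 False by (intro powr_mono2') auto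
        finally show ?thesis .
      qed
      ultimately have "\<gamma> / 2 * (S powr (p - 2) / 2) \<le> (p - 1) * (1 + S) powr (p - 2)"
        using \<gamma> by (intro mult_mono) auto
      hence "\<gamma> * S powr (p - 2) \<le> 4 * ((p - 1) * (1 + S) powr (p - 2))" by simp
      also have "\<dots> \<le> (A * p) * ((p - 1) * (1 + S) powr (p - 2))"
        using A p1 mult_mono[of 4 A 1 p] by (intro mult_right_mono) auto
      finally show ?thesis by (simp only: mult.assoc)
    qed
    also have "\<dots> \<le> sub_profile'' A B p S" using B M by (simp add: sub_profile''_def mult.assoc)
    finally show ?thesis .
  qed
qed

lemma sub_profile_key_inequality:
  assumes \<gamma>: "0 \<le> \<gamma>" "\<gamma> \<le> 1" and p: "p = 2 / (2 - \<gamma>)" and A: "4 \<le> A"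
    and B: "3 * (2 * M + 1) \<le> B" and M: "0 \<le> M" and S: "0 \<le> S"
    and \<epsilon>: "0 < \<epsilon>" "\<epsilon> \<le> \<rho>" and N: "0 \<le> N"
    and inner: "N < \<rho> / 2 \<Longrightarrow> \<rho> \<le> \<epsilon> * S"
  shows "\<rho>\<^sup>2 * reaction_bound M \<gamma> (sub_profile A B p S)
           < \<rho> * \<epsilon> * sub_profile' A B p S + 4 * N\<^sup>2 * sub_profile'' A B p S"
proof -
  have p1: "1 \<le> p" using \<gamma> by (simp add: p le_divide_eq)
  define k where "k = reaction_bound M \<gamma> (sub_profile A B p S)"
  have k: "0 \<le> k" using M \<gamma> by (simp add: k_def reaction_bound_def)
  have k_le: "k \<le> sub_profile'' A B p S"
    unfolding k_def by (rule sub_profile''_ge_reaction_bound[OF \<gamma> p A B M S])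
  have P1: "0 < sub_profile' A B p S" using p1 S A B M by (intro sub_profile'_pos) auto
  have "0 < \<rho>" using \<epsilon> by simp
  show ?thesis
  proof (cases "\<rho> / 2 \<le> N")
    case True
    hence "(\<rho> / 2)\<^sup>2 \<le> N\<^sup>2" using \<open>0 < \<rho>\<close> by (intro power_mono) auto
    hence "\<rho>\<^sup>2 \<le> 4 * N\<^sup>2" by (simp add: power_divide)
    hence "\<rho>\<^sup>2 * k \<le> 4 * N\<^sup>2 * sub_profile'' A B p S" using k k_le by (intro mult_mono) auto
    moreover have "0 < \<rho> * \<epsilon> * sub_profile' A B p S" using \<open>0 < \<rho>\<close> \<epsilon> P1 by simp
    ultimately show ?thesis by (simp add: k_def)
  next
    case False
    hence \<epsilon>S: "\<rho> \<le> \<epsilon> * S" using inner by simp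
    hence "\<epsilon> * 1 \<le> \<epsilon> * S" using \<epsilon> by linarith
    hence "1 \<le> S" using \<epsilon> by (simp only: mult_le_cancel_left_pos)
    hence "1 \<le> S powr p" using p1 by (intro ge_one_powr_ge_zero) auto
    hence "1 < A * S powr p" using mult_mono[of 4 A 1 "S powr p"] A by simp
    hence "k \<le> \<gamma> * S powr (p - 2)"
      unfolding k_def using A B M S p1
      by (intro reaction_bound_le_power[OF \<gamma> p _ S sub_profile_ge]) auto
    also have "\<dots> \<le> S powr (p - 2)" using \<gamma> by (intro mult_left_le_one_le) auto
    finally have "\<rho>\<^sup>2 * k \<le> \<rho>\<^sup>2 * S powr (p - 2)" by (intro mult_left_mono) auto
    also have "\<dots> < A * (\<rho> * \<rho>) * S powr (p - 2)"
      using A \<open>0 < \<rho>\<close> \<open>1 \<le> S\<close> by (simp add: power2_eq_square)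
    also have "\<dots> \<le> A * (\<rho> * (\<epsilon> * S)) * S powr (p - 2)"
      using A \<open>0 < \<rho>\<close> \<epsilon>S \<open>1 \<le> S\<close> by (intro mult_right_mono mult_left_mono) auto
    also have "\<dots> = \<rho> * \<epsilon> * (A * S powr (p - 1))"
      using \<open>1 \<le> S\<close> powr_mult_base[of S "p - 2"] by (simp add: algebra_simps)
    also have "\<dots> \<le> \<rho> * \<epsilon> * sub_profile' A B p S"
      using \<open>0 < \<rho>\<close> \<epsilon> p1 S A B M by (intro mult_left_mono sub_profile'_ge) auto
    finally have "\<rho>\<^sup>2 * k < \<rho> * \<epsilon> * sub_profile' A B p S" .
    moreover have "0 \<le> 4 * N\<^sup>2 * sub_profile'' A B p S" using k k_le by simp
    ultimately show ?thesis unfolding k_def by linarith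
  qed
qed

text \<open>The cut-off at \<open>-1/2\<close> keeps the barrier negative wherever \<open>z < 0\<close>
  (\<open>sub_profile\<close> is negative only on \<open>[-1/2, 0)\<close>) without affecting it near \<open>z \<ge> 0\<close>.\<close>
definition sub_barrier :: "real \<Rightarrow> real \<Rightarrow> real \<Rightarrow> real \<Rightarrow> real \<Rightarrow> real \<Rightarrow> real" where
  "sub_barrier A B p \<epsilon> \<rho> z = \<epsilon> powr p * sub_profile A B p (max (z / (\<rho> * \<epsilon>)) (-1/2))"

lemma sub_barrier_neg:
  assumes "0 < p" "0 < A" "0 < B" "0 < \<rho>" "0 < \<epsilon>" "z < 0"
  shows "sub_barrier A B p \<epsilon> \<rho> z < 0"
proof -
  have "z / (\<rho> * \<epsilon>) < 0" using assms by (simp add: divide_neg_pos)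
  hence "sub_profile A B p (max (z / (\<rho> * \<epsilon>)) (-1/2)) < 0"
    using assms by (intro sub_profile_neg) auto
  thus ?thesis using assms by (simp add: sub_barrier_def mult_pos_neg)
qed

lemma continuous_on_sub_barrier: "continuous_on S (sub_barrier A B p \<epsilon> \<rho>)"
proof (rule continuous_at_imp_continuous_on, rule ballI)
  fix z
  have "isCont (sub_profile A B p) (max (z / (\<rho> * \<epsilon>)) (-1/2))"
    by (rule DERIV_isCont[OF has_real_derivative_sub_profile]) simp
  moreover have "isCont (\<lambda>z. max (z / (\<rho> * \<epsilon>)) (-1/2)) z"
    unfolding divide_inverse by (intro continuous_intros)
  ultimately have "isCont (\<lambda>z. sub_profile A B p (max (z / (\<rho> * \<epsilon>)) (-1/2))) z"
    using isCont_o2 by blast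
  thus "isCont (sub_barrier A B p \<epsilon> \<rho>) z"
    unfolding sub_barrier_def[abs_def] by (intro continuous_intros)
qed


lemma sub_barrier_le:
  assumes p: "1 \<le> p" and \<epsilon>: "0 < \<epsilon>" "\<epsilon> \<le> \<rho>" and A: "0 < A" and B: "0 < B"
    and a: "0 \<le> a" and z: "z \<le> a * \<rho>\<^sup>2"
  shows "sub_barrier A B p \<epsilon> \<rho> z \<le> (A * (1 + a) powr p + 2 * B * a) * \<rho> powr p"
proof (cases "z < 0")
  case True
  thus ?thesis using sub_barrier_neg[of p A B \<rho> \<epsilon> z] assms
    by (smt (verit) mult_nonneg_nonneg powr_ge_zero)
next
  case False
  define S where "S = z / (\<rho> * \<epsilon>)"
  have "0 < \<rho>" using \<epsilon> by simp
  have S: "0 \<le> S" using False \<epsilon> by (simp add: S_def)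
  have \<epsilon>S: "\<epsilon> * S \<le> a * \<rho>"
    using z \<open>0 < \<rho>\<close> \<epsilon> by (simp add: S_def power2_eq_square field_simps)
  have "sub_barrier A B p \<epsilon> \<rho> z = \<epsilon> powr p * sub_profile A B p S"
    using S by (simp add: sub_barrier_def S_def)
  also have "\<dots> \<le> \<epsilon> powr p * (A * (1 + S) powr p + 2 * B * S)"
    using sub_profile_le[OF S, of A B p] A B by (intro mult_left_mono) auto
  also have "\<dots> = A * (\<epsilon> * (1 + S)) powr p + 2 * B * (\<epsilon> powr (p - 1) * (\<epsilon> * S))"
  proof -
    have "\<epsilon> powr p * (1 + S) powr p = (\<epsilon> * (1 + S)) powr p"
      using \<epsilon> S by (subst powr_mult) auto
    moreover have "\<epsilon> powr p * S = \<epsilon> powr (p - 1) * (\<epsilon> * S)"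
      using \<epsilon> powr_mult_base[of \<epsilon> "p - 1"] by (simp add: algebra_simps)
    ultimately show ?thesis by (simp add: algebra_simps)
  qed
  also have "\<dots> \<le> A * ((1 + a) * \<rho>) powr p + 2 * B * (\<rho> powr (p - 1) * (a * \<rho>))"
  proof -
    have "(\<epsilon> * (1 + S)) powr p \<le> ((1 + a) * \<rho>) powr p"
      using \<epsilon> \<epsilon>S S p by (intro powr_mono2) (auto simp: algebra_simps)
    moreover have "\<epsilon> powr (p - 1) * (\<epsilon> * S) \<le> \<rho> powr (p - 1) * (a * \<rho>)"
      using \<epsilon> \<epsilon>S S p a by (intro mult_mono[OF powr_mono2]) auto
    ultimately show ?thesis using A B by (intro add_mono mult_left_mono) auto
  qed
  also have "\<dots> = (A * (1 + a) powr p + 2 * B * a) * \<rho> powr p"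
  proof -
    have e1: "((1 + a) * \<rho>) powr p = (1 + a) powr p * \<rho> powr p"
      using a \<open>0 < \<rho>\<close> by (simp add: powr_mult)
    have e2: "\<rho> powr (p - 1) * (a * \<rho>) = a * \<rho> powr p"
      using \<open>0 < \<rho>\<close> powr_mult_base[of \<rho> "p - 1"] by (simp add: algebra_simps)
    show ?thesis unfolding e1 e2 by (simp add: algebra_simps)
  qed
  finally show ?thesis .
qed

lemma sub_barrier_ge:
  assumes p: "1 \<le> p" and \<epsilon>: "0 < \<epsilon>" "\<epsilon> \<le> \<rho>" and A: "0 \<le> A" and B: "0 \<le> B"
    and z: "\<rho>\<^sup>2 \<le> z"
  shows "A * \<epsilon> powr p \<le> sub_barrier A B p \<epsilon> \<rho> z"
proof -
  define S where "S = z / (\<rho> * \<epsilon>)"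
  have "0 < \<rho>" using \<epsilon> by simp
  have "\<rho> * \<epsilon> \<le> z" using z \<epsilon> \<open>0 < \<rho>\<close> by (smt (verit) mult_left_mono power2_eq_square)
  hence S: "1 \<le> S" using \<epsilon> \<open>0 < \<rho>\<close> by (simp add: S_def)
  have "A * \<epsilon> powr p \<le> \<epsilon> powr p * (A * S powr p)"
  proof -
    have "A \<le> A * S powr p" using S p A mult_left_mono[of 1 "S powr p" A] by (simp add: ge_one_powr_ge_zero)
    thus ?thesis using mult_right_mono[of A "A * S powr p" "\<epsilon> powr p"] by (simp add: mult.commute)
  qed
  also have "\<dots> \<le> \<epsilon> powr p * sub_profile A B p S"
    using sub_profile_ge[of p S A B] S p A B by (intro mult_left_mono) auto
  also have "\<dots> = sub_barrier A B p \<epsilon> \<rho> z"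
    using S by (simp add: sub_barrier_def S_def)
  finally show ?thesis .
qed

lemma sub_barrier_derivatives:
  assumes \<rho>: "0 < \<rho>" and \<epsilon>: "0 < \<epsilon>" and z0: "0 \<le> z0"
  shows "\<forall>z. \<bar>z - z0\<bar> < \<rho> * \<epsilon> / 2 \<longrightarrow> (sub_barrier A B p \<epsilon> \<rho> has_real_derivative
           \<epsilon> powr p / (\<rho> * \<epsilon>) * sub_profile' A B p (z / (\<rho> * \<epsilon>))) (at z)"
    and "((\<lambda>z. \<epsilon> powr p / (\<rho> * \<epsilon>) * sub_profile' A B p (z / (\<rho> * \<epsilon>))) has_real_derivative
           \<epsilon> powr p / (\<rho> * \<epsilon>)\<^sup>2 * sub_profile'' A B p (z0 / (\<rho> * \<epsilon>))) (at z0)"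
proof -
  have re: "0 < \<rho> * \<epsilon>" using \<rho> \<epsilon> by simp
  show "\<forall>z. \<bar>z - z0\<bar> < \<rho> * \<epsilon> / 2 \<longrightarrow> (sub_barrier A B p \<epsilon> \<rho> has_real_derivative
           \<epsilon> powr p / (\<rho> * \<epsilon>) * sub_profile' A B p (z / (\<rho> * \<epsilon>))) (at z)"
  proof (intro allI impI)
    fix z assume "\<bar>z - z0\<bar> < \<rho> * \<epsilon> / 2"
    hence z: "z \<in> {- (\<rho> * \<epsilon>) / 2 <..}" using z0 by (simp only: greaterThan_iff)
    have "((\<lambda>z. \<epsilon> powr p * sub_profile A B p (z / (\<rho> * \<epsilon>))) has_real_derivative
            \<epsilon> powr p / (\<rho> * \<epsilon>) * sub_profile' A B p (z / (\<rho> * \<epsilon>))) (at z)"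
      using z re
      by (auto intro!: derivative_eq_intros DERIV_chain2[OF has_real_derivative_sub_profile]
               simp: field_simps)
    thus "(sub_barrier A B p \<epsilon> \<rho> has_real_derivative
           \<epsilon> powr p / (\<rho> * \<epsilon>) * sub_profile' A B p (z / (\<rho> * \<epsilon>))) (at z)"
    proof (rule has_field_derivative_transform_within_open[OF _ _ z])
      show "\<epsilon> powr p * sub_profile A B p (x / (\<rho> * \<epsilon>)) = sub_barrier A B p \<epsilon> \<rho> x"
        if "x \<in> {- (\<rho> * \<epsilon>) / 2 <..}" for x
        using that re by (simp add: sub_barrier_def field_simps max_def)
    qed simp
  qed
  show "((\<lambda>z. \<epsilon> powr p / (\<rho> * \<epsilon>) * sub_profile' A B p (z / (\<rho> * \<epsilon>))) has_real_derivative
           \<epsilon> powr p / (\<rho> * \<epsilon>)\<^sup>2 * sub_profile'' A B p (z0 / (\<rho> * \<epsilon>))) (at z0)"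
    using z0 re
    by (auto intro!: derivative_eq_intros DERIV_chain2[OF has_real_derivative_sub_profile']
             simp: field_simps power2_eq_square)
qed

section \<open>Barriers as strict sub- and supersolutions\<close>

definition power_barrier :: "real \<Rightarrow> real \<Rightarrow> real \<Rightarrow> real^'n \<Rightarrow> real^'n \<Rightarrow> real \<Rightarrow> real" where
  "power_barrier K p \<alpha> xc y s = K * (\<alpha> + (2 * real CARD('n) + 1) * s + (norm (y - xc))\<^sup>2) powr (p / 2)"

locale reaction_parameters =
  fixes h :: "real \<Rightarrow> real" and \<gamma> \<beta> \<epsilon> :: real
  assumes admissible: "admissible_h h" and gamma: "0 \<le> \<gamma>" "\<gamma> \<le> 1"
    and beta: "\<beta> = 2 / (2 - \<gamma>)" and eps: "0 < \<epsilon>"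
begin

lemma beta_bounds: "1 \<le> \<beta>" "\<beta> \<le> 2"
  using gamma by (auto simp: beta le_divide_eq divide_le_eq)

lemma reaction_nonneg: "0 \<le> f_eps h \<gamma> \<beta> \<epsilon> u"
  by (rule f_eps_nonneg[OF admissible gamma(1)])

lemma reaction_le_bound:
  assumes "0 \<le> u"
  shows "f_eps h \<gamma> \<beta> \<epsilon> u \<le> \<epsilon> powr (\<beta> - 2) * reaction_bound (SUP s\<in>{0..1}. h s) \<gamma> (u / \<epsilon> powr \<beta>)"
proof -
  have "\<beta> * (\<gamma> - 1) = \<beta> - 2" using gamma by (simp add: beta field_simps)
  from f_eps_rescale[OF this eps] show ?thesis
    using f_eps_one_le_reaction_bound[OF admissible gamma, of "u / \<epsilon> powr \<beta>" \<beta>] assms eps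
    by (simp add: mult_left_mono)
qed

lemma power_barrier_strict_supersolution:
  fixes xc y :: "real^'n"
  defines "c \<equiv> 2 * real CARD('n) + 1"
  assumes K: "0 < K" and pos: "0 < \<alpha> + c * s + (norm (y - xc))\<^sup>2"
  shows "strict_barrier_at (-1) (f_eps h \<gamma> \<beta> \<epsilon>) (power_barrier K \<beta> \<alpha> xc) y s"
proof -
  define z0 where "z0 = \<alpha> + c * s + (norm (y - xc))\<^sup>2"
  define \<Phi>' where "\<Phi>' = (\<lambda>z. K * (\<beta> / 2 * z powr (\<beta> / 2 - 1)))"
  define \<Phi>'' where "\<Phi>'' = K * (\<beta> / 2 * ((\<beta> / 2 - 1) * z0 powr (\<beta> / 2 - 1 - 1)))"
  have z0: "0 < z0" using pos by (simp add: z0_def)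
  have d\<Phi>: "\<forall>z. \<bar>z - z0\<bar> < z0 \<longrightarrow> ((\<lambda>z. K * z powr (\<beta> / 2)) has_real_derivative \<Phi>' z) (at z)"
    unfolding \<Phi>'_def by (auto intro!: derivative_eq_intros)
  have d\<Phi>': "(\<Phi>' has_real_derivative \<Phi>'') (at z0)"
    unfolding \<Phi>'_def \<Phi>''_def using z0 by (auto intro!: derivative_eq_intros)
  have "\<Phi>'' \<le> 0" using K beta_bounds z0
    unfolding \<Phi>''_def by (intro mult_nonneg_nonpos mult_nonpos_nonneg) auto
  hence "\<Phi>'' * (4 * (norm (y - xc))\<^sup>2) \<le> 0" by (simp add: mult_nonpos_nonneg)
  moreover have "0 < \<Phi>' z0" using K beta_bounds z0 by (simp add: \<Phi>'_def)
  moreover have "0 \<le> f_eps h \<gamma> \<beta> \<epsilon> (K * z0 powr (\<beta> / 2))" by (rule reaction_nonneg)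
  ultimately have "- 1 * (\<Phi>' z0 * c - (4 * 1\<^sup>2 * (norm (y - xc))\<^sup>2 * \<Phi>'' + 2 * real CARD('n) * 1 * \<Phi>' z0)
                    + f_eps h \<gamma> \<beta> \<epsilon> (K * z0 powr (\<beta> / 2))) < 0"
    by (simp add: c_def algebra_simps)
  hence "strict_barrier_at (-1) (f_eps h \<gamma> \<beta> \<epsilon>)
           (\<lambda>y s. K * (\<alpha> + c * s + 1 * (norm (y - xc))\<^sup>2) powr (\<beta> / 2)) y s"
    by (intro radial_strict_barrier[where \<Phi> = "\<lambda>z. K * z powr (\<beta> / 2)", OF z0 d\<Phi> d\<Phi>'])
       (simp_all add: z0_def)
  thus ?thesis by (simp add: power_barrier_def[abs_def] c_def)
qed


lemma sub_barrier_strict_subsolution: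
  fixes xc y :: "real^'n"
  defines "c \<equiv> 2 * real CARD('n) + 1" and "M \<equiv> SUP s\<in>{0..1}. h s"
  assumes A: "4 \<le> A" and B: "3 * (2 * M + 1) \<le> B" and \<rho>: "\<epsilon> \<le> \<rho>"
    and nonneg: "0 \<le> \<alpha> - c * s - (norm (y - xc))\<^sup>2"
    and inner: "norm (y - xc) < \<rho> / 2 \<Longrightarrow> \<rho>\<^sup>2 \<le> \<alpha> - c * s - (norm (y - xc))\<^sup>2"
  shows "strict_barrier_at 1 (f_eps h \<gamma> \<beta> \<epsilon>)
           (\<lambda>y s. sub_barrier A B \<beta> \<epsilon> \<rho> (\<alpha> - c * s - (norm (y - xc))\<^sup>2)) y s"
proof -
  define N where "N = norm (y - xc)"
  define z0 where "z0 = \<alpha> - c * s - N\<^sup>2"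
  define S where "S = z0 / (\<rho> * \<epsilon>)"
  define D where "D = \<epsilon> powr \<beta> / (\<rho> * \<epsilon>)\<^sup>2"
  have "0 < \<rho>" "0 < \<rho> * \<epsilon>" using eps \<rho> by auto
  have "0 \<le> z0" using nonneg by (simp add: z0_def N_def)
  have "0 \<le> S" using nonneg \<open>0 < \<rho> * \<epsilon>\<close> by (simp add: S_def z0_def N_def)
  have "0 \<le> M" unfolding M_def by (rule admissible_h_sup_nonneg[OF admissible])
  have "0 < D" using eps \<open>0 < \<rho>\<close> by (simp add: D_def)
  have at_z0: "sub_barrier A B \<beta> \<epsilon> \<rho> z0 = \<epsilon> powr \<beta> * sub_profile A B \<beta> S"
    using \<open>0 \<le> S\<close> by (simp add: sub_barrier_def S_def)
  have key: "\<rho>\<^sup>2 * reaction_bound M \<gamma> (sub_profile A B \<beta> S)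
               < \<rho> * \<epsilon> * sub_profile' A B \<beta> S + 4 * N\<^sup>2 * sub_profile'' A B \<beta> S"
  proof (rule sub_profile_key_inequality[OF gamma beta A B \<open>0 \<le> M\<close> \<open>0 \<le> S\<close> eps \<rho>])
    assume "N < \<rho> / 2"
    hence "\<rho>\<^sup>2 \<le> z0" using inner by (simp add: z0_def N_def)
    hence "\<rho> * \<rho> \<le> \<rho> * (\<epsilon> * S)"
      using \<open>0 < \<rho>\<close> eps by (simp add: S_def power2_eq_square)
    thus "\<rho> \<le> \<epsilon> * S" using \<open>0 < \<rho>\<close> by simp
  qed (simp add: N_def)
  have "f_eps h \<gamma> \<beta> \<epsilon> (\<epsilon> powr \<beta> * sub_profile A B \<beta> S)
          \<le> \<epsilon> powr (\<beta> - 2) * reaction_bound M \<gamma> (sub_profile A B \<beta> S)"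
  proof -
    have "0 \<le> sub_profile A B \<beta> S"
    proof (rule order_trans[OF _ sub_profile_ge])
      show "0 \<le> A * S powr \<beta>" using A by simp
    qed (use beta_bounds \<open>0 \<le> S\<close> A B \<open>0 \<le> M\<close> in auto)
    thus ?thesis using reaction_le_bound[of "\<epsilon> powr \<beta> * sub_profile A B \<beta> S"] eps
      by (simp add: M_def)
  qed
  also have "\<dots> = D * (\<rho>\<^sup>2 * reaction_bound M \<gamma> (sub_profile A B \<beta> S))"
    using eps \<open>0 < \<rho>\<close> by (simp add: D_def powr_diff power2_eq_square field_simps)
  also have "\<dots> < D * (\<rho> * \<epsilon> * sub_profile' A B \<beta> S + 4 * N\<^sup>2 * sub_profile'' A B \<beta> S)"
    using key \<open>0 < D\<close> by simp
  finally have F_lt: "f_eps h \<gamma> \<beta> \<epsilon> (sub_barrier A B \<beta> \<epsilon> \<rho> z0)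
      < D * (\<rho> * \<epsilon> * sub_profile' A B \<beta> S + 4 * N\<^sup>2 * sub_profile'' A B \<beta> S)"
    by (simp add: at_z0)
  define \<Phi>' where "\<Phi>' = (\<lambda>z. \<epsilon> powr \<beta> / (\<rho> * \<epsilon>) * sub_profile' A B \<beta> (z / (\<rho> * \<epsilon>)))"
  define \<Phi>'' where "\<Phi>'' = \<epsilon> powr \<beta> / (\<rho> * \<epsilon>)\<^sup>2 * sub_profile'' A B \<beta> (z0 / (\<rho> * \<epsilon>))"
  have "\<Phi>' z0 = D * (\<rho> * \<epsilon>) * sub_profile' A B \<beta> S"
    using \<open>0 < \<rho> * \<epsilon>\<close> by (simp add: \<Phi>'_def D_def S_def power2_eq_square)
  moreover have "\<Phi>'' = D * sub_profile'' A B \<beta> S" by (simp add: \<Phi>''_def D_def S_def)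
  ultimately have "1 * (\<Phi>' z0 * (- c) - (4 * (- 1)\<^sup>2 * (norm (y - xc))\<^sup>2 * \<Phi>''
      + 2 * real CARD('n) * (- 1) * \<Phi>' z0) + f_eps h \<gamma> \<beta> \<epsilon> (sub_barrier A B \<beta> \<epsilon> \<rho> z0)) < 0"
    using F_lt by (simp add: N_def[symmetric] c_def algebra_simps)
  moreover have "z0 = \<alpha> + - c * s + - 1 * (norm (y - xc))\<^sup>2" by (simp add: z0_def N_def)
  ultimately have "strict_barrier_at 1 (f_eps h \<gamma> \<beta> \<epsilon>)
           (\<lambda>y s. sub_barrier A B \<beta> \<epsilon> \<rho> (\<alpha> + - c * s + - 1 * (norm (y - xc))\<^sup>2)) y s"
    using sub_barrier_derivatives[OF \<open>0 < \<rho>\<close> eps \<open>0 \<le> z0\<close>, where A = A and B = B and p = \<beta>]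
      \<open>0 < \<rho> * \<epsilon>\<close>
    by (intro radial_strict_barrier[where \<Phi>' = \<Phi>' and \<Phi>'' = \<Phi>'' and \<eta> = "\<rho> * \<epsilon> / 2"])
       (simp_all add: \<Phi>'_def \<Phi>''_def)
  thus ?thesis by simp
qed


end


section \<open>The estimate forward and backward in time\<close>

lemma mem_cyl_iff: "(y, s) \<in> cyl r x0 t0 \<longleftrightarrow> dist x0 y < r \<and> t0 - r\<^sup>2 < s \<and> s < t0 + r\<^sup>2"
  by (simp add: cyl_def)

lemma less_powr_of_root_less:
  fixes v k z p :: real
  assumes "0 < p" "0 \<le> v" "0 \<le> k" "0 \<le> z" "v powr (1 / p) < k * sqrt z"
  shows "v < k powr p * z powr (p / 2)"
proof -
  have "v = (v powr (1 / p)) powr p" using assms by (simp add: powr_powr)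
  also have "\<dots> < (k * sqrt z) powr p" using assms by (intro powr_less_mono2) auto
  also have "\<dots> = k powr p * z powr (p / 2)"
    using assms by (simp add: powr_mult powr_half_sqrt[symmetric] powr_powr)
  finally show ?thesis .
qed

lemma le_powr_of_root_le:
  fixes v m p :: real
  assumes "0 < p" "0 \<le> v" "v powr (1 / p) \<le> m"
  shows "v \<le> m powr p"
proof -
  have "v = (v powr (1 / p)) powr p" using assms(1,2) powr_powr[of v "1 / p" p] by simp
  also have "\<dots> \<le> m powr p" using assms by (intro powr_mono2) auto
  finally show ?thesis .
qed

lemma powr_less_of_less_root:
  fixes v m p :: real
  assumes "0 < p" "0 \<le> m" "0 \<le> v" "m < v powr (1 / p)"
  shows "m powr p < v"
proof -
  have "m powr p < (v powr (1 / p)) powr p" using assms by (intro powr_less_mono2) auto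
  also have "\<dots> = v" using assms(1,3) powr_powr[of v "1 / p" p] by simp
  finally show ?thesis .
qed

definition backward_constant :: "real \<Rightarrow> real \<Rightarrow> real \<Rightarrow> real \<Rightarrow> nat \<Rightarrow> real" where
  "backward_constant \<theta> L M \<beta> n =
     (let a = 2 * real n + 3; K = (\<theta> + 4) * (1 + a) powr \<beta> + 6 * (2 * M + 1) * a
      in max ((4 * a * L) powr \<beta>) ((K powr (1 / \<beta>) + L * sqrt a) powr \<beta>))"

definition forward_constant :: "real \<Rightarrow> real \<Rightarrow> real \<Rightarrow> nat \<Rightarrow> real" where
  "forward_constant \<theta> L \<beta> n = (4 * (\<theta> powr (1 / \<beta>) + L) + 1) powr \<beta> * (2 * real n + 2) powr (\<beta> / 2)"

locale small_at_base_point = reaction_parameters h \<gamma> \<beta> \<epsilon> for h \<gamma> \<beta> \<epsilon> +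
  fixes u :: "real^'n \<Rightarrow> real \<Rightarrow> real" and L \<theta> :: real and x0 :: "real^'n" and t0 :: real
  assumes solution: "classical_solution (f_eps h \<gamma> \<beta> \<epsilon>) (cyl 1 0 0) u"
    and nonneg: "\<And>x t. (x, t) \<in> cyl 1 0 0 \<Longrightarrow> 0 \<le> u x t"
    and root_bounded: "\<And>x t. (x, t) \<in> cyl 1 0 0 \<Longrightarrow> u x t powr (1 / \<beta>) \<le> L"
    and root_lipschitz: "\<And>y z t. y \<in> ball 0 1 \<Longrightarrow> z \<in> ball 0 1 \<Longrightarrow> -1 < t \<Longrightarrow> t < 1 \<Longrightarrow>
                           u z t powr (1 / \<beta>) \<le> u y t powr (1 / \<beta>) + L * dist y z"
    and theta: "0 < \<theta>"
    and base: "(x0, t0) \<in> cyl (1/2) 0 0"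
    and small: "u x0 t0 \<le> \<theta> * \<epsilon> powr \<beta>"
begin

lemma base_bounds: "norm x0 < 1/2" "-1/4 < t0" "t0 < 1/4"
  using base by (auto simp: mem_cyl_iff power2_eq_square)

lemma base_in_cyl: "(x0, t0) \<in> cyl 1 0 0"
  using base_bounds by (simp add: mem_cyl_iff)

lemma L_nonneg: "0 \<le> L"
  using root_bounded[OF base_in_cyl] by (smt (verit) powr_ge_zero)

lemma root_at_base: "u x0 t0 powr (1 / \<beta>) \<le> \<theta> powr (1 / \<beta>) * \<epsilon>"
proof -
  have "u x0 t0 powr (1 / \<beta>) \<le> (\<theta> * \<epsilon> powr \<beta>) powr (1 / \<beta>)"
    using nonneg[OF base_in_cyl] small beta_bounds by (intro powr_mono2) auto
  also have "\<dots> = \<theta> powr (1 / \<beta>) * \<epsilon>"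
    using theta eps beta_bounds by (simp add: powr_mult powr_powr)
  finally show ?thesis .
qed

lemma root_near_base:
  assumes "(y, t0) \<in> cyl 1 0 0"
  shows "u y t0 powr (1 / \<beta>) \<le> (\<theta> powr (1 / \<beta>) + L) * sqrt (\<epsilon>\<^sup>2 + (dist x0 y)\<^sup>2)"
proof -
  have "u y t0 powr (1 / \<beta>) \<le> u x0 t0 powr (1 / \<beta>) + L * dist x0 y"
    using root_lipschitz base_in_cyl assms by (simp add: mem_cyl_iff)
  moreover have "\<epsilon> \<le> sqrt (\<epsilon>\<^sup>2 + (dist x0 y)\<^sup>2)" "dist x0 y \<le> sqrt (\<epsilon>\<^sup>2 + (dist x0 y)\<^sup>2)"
    by (auto intro: real_le_rsqrt)
  hence "\<theta> powr (1 / \<beta>) * \<epsilon> \<le> \<theta> powr (1 / \<beta>) * sqrt (\<epsilon>\<^sup>2 + (dist x0 y)\<^sup>2)"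
    "L * dist x0 y \<le> L * sqrt (\<epsilon>\<^sup>2 + (dist x0 y)\<^sup>2)"
    using L_nonneg by (simp_all add: mult_left_mono)
  ultimately show ?thesis using root_at_base by (simp add: algebra_simps)
qed

lemma forward_cylinder_subset:
  assumes "0 \<le> r" "r < 1/4"
  shows "cball x0 (1/4) \<times> {t0..t0 + r\<^sup>2} \<subseteq> cyl 1 0 0"
proof
  fix q assume "q \<in> cball x0 (1/4) \<times> {t0..t0 + r\<^sup>2}"
  then obtain y s where q: "q = (y, s)" "dist x0 y \<le> 1/4" "t0 \<le> s" "s \<le> t0 + r\<^sup>2" by auto
  moreover have "norm y \<le> norm x0 + dist x0 y"
    using norm_triangle_ineq[of x0 "y - x0"] by (simp add: dist_norm norm_minus_commute)
  moreover have "r\<^sup>2 < 1/16" using assms power_strict_mono[of r "1/4" 2] by (simp add: power2_eq_square)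
  ultimately show "q \<in> cyl 1 0 0" using base_bounds by (simp add: mem_cyl_iff)
qed

lemma forward_comparison:
  defines "k \<equiv> 4 * (\<theta> powr (1 / \<beta>) + L) + 1" and "\<alpha> \<equiv> \<epsilon>\<^sup>2 - (2 * real CARD('n) + 1) * t0"
  assumes r: "0 \<le> r" "r < 1/4"
  shows "\<forall>y\<in>cball x0 (1/4). \<forall>s\<in>{t0..t0 + r\<^sup>2}. u y s < power_barrier (k powr \<beta>) \<beta> \<alpha> x0 y s"
proof -
  define c where "c = 2 * real CARD('n) + 1"
  define w where "w = power_barrier (k powr \<beta>) \<beta> \<alpha> x0"
  have w: "w y s = k powr \<beta> * (\<alpha> + c * s + (norm (y - x0))\<^sup>2) powr (\<beta> / 2)" for y s
    by (simp add: w_def power_barrier_def c_def)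
  note sub = forward_cylinder_subset[OF r]
  have "0 < c" "0 < k" using L_nonneg by (simp_all add: c_def k_def add_nonneg_pos)
  have arg_ge: "\<epsilon>\<^sup>2 + (norm (y - x0))\<^sup>2 \<le> \<alpha> + c * s + (norm (y - x0))\<^sup>2" if "t0 \<le> s" for y s
    using that \<open>0 < c\<close> by (simp add: \<alpha>_def c_def mult_left_mono)
  have arg_pos: "0 < \<alpha> + c * s + (norm (y - x0))\<^sup>2" if "t0 \<le> s" for y s
    using arg_ge[OF that, of y] eps by (smt (verit) zero_less_power2 zero_le_power2)
  have below: "u y s < w y s"
    if "(y, s) \<in> cyl 1 0 0" "t0 \<le> s" "u y s powr (1 / \<beta>) < k * sqrt (\<alpha> + c * s + (norm (y - x0))\<^sup>2)" for y s
    using that \<open>0 < k\<close> beta_bounds arg_pos[OF that(2), of y]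
    unfolding w by (intro less_powr_of_root_less nonneg) auto
  have "\<theta> powr (1 / \<beta>) + L < k"
    using L_nonneg powr_ge_zero[of \<theta> "1 / \<beta>"] unfolding k_def by (simp only: ring_distribs)
  have "\<forall>y\<in>cball x0 (1/4). \<forall>s\<in>{t0..t0 + r\<^sup>2}. -1 * (w y s - u y s) < 0"
  proof (rule comparison_principle[OF solution sub])
    have "\<alpha> + c * snd q + (norm (fst q - x0))\<^sup>2 \<noteq> 0" if "q \<in> cball x0 (1/4) \<times> {t0..t0 + r\<^sup>2}" for q
      using arg_pos[of "snd q" "fst q"] that by (auto simp: mem_Times_iff)
    thus "continuous_on (cball x0 (1/4) \<times> {t0..t0 + r\<^sup>2}) (\<lambda>(y, s). w y s)"
      unfolding w case_prod_beta by (intro continuous_intros) blast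
    show "\<forall>y\<in>cball x0 (1/4). -1 * (w y t0 - u y t0) < 0"
    proof
      fix y assume "y \<in> cball x0 (1/4)"
      hence "(y, t0) \<in> cyl 1 0 0" using sub by auto
      moreover have "0 < \<epsilon>\<^sup>2 + (dist x0 y)\<^sup>2" using eps by (simp add: add_pos_nonneg)
      ultimately have "u y t0 powr (1 / \<beta>) < k * sqrt (\<epsilon>\<^sup>2 + (dist x0 y)\<^sup>2)"
        using root_near_base \<open>\<theta> powr (1 / \<beta>) + L < k\<close>
        by (smt (verit) mult_strict_right_mono real_sqrt_gt_zero)
      thus "-1 * (w y t0 - u y t0) < 0"
        using below[OF \<open>(y, t0) \<in> cyl 1 0 0\<close>] by (simp add: \<alpha>_def c_def dist_norm norm_minus_commute)
    qed
    show "\<forall>y s. dist x0 y = 1/4 \<and> s \<in> {t0..t0 + r\<^sup>2} \<longrightarrow> -1 * (w y s - u y s) < 0"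
    proof (intro allI impI)
      fix y s assume ys: "dist x0 y = 1/4 \<and> s \<in> {t0..t0 + r\<^sup>2}"
      hence "(y, s) \<in> cyl 1 0 0" using sub by auto
      have "k * (1/4) = \<theta> powr (1 / \<beta>) + L + 1/4" by (simp add: k_def algebra_simps)
      hence "u y s powr (1 / \<beta>) < k * (1/4)"
        using root_bounded[OF \<open>(y, s) \<in> cyl 1 0 0\<close>] powr_ge_zero[of \<theta> "1 / \<beta>"] by linarith
      also have "\<dots> \<le> k * sqrt (\<alpha> + c * s + (norm (y - x0))\<^sup>2)"
      proof -
        have N: "norm (y - x0) = 1/4" using ys by (simp add: dist_norm norm_minus_commute)
        have "\<epsilon>\<^sup>2 \<le> \<alpha> + c * s" using arg_ge[of s y] ys by simp
        hence "(1/4)\<^sup>2 \<le> \<alpha> + c * s + (norm (y - x0))\<^sup>2"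
          unfolding N by (smt (verit) zero_le_power2)
        thus ?thesis using \<open>0 < k\<close> by (intro mult_left_mono real_le_rsqrt) auto
      qed
      finally show "-1 * (w y s - u y s) < 0"
        using below[OF \<open>(y, s) \<in> cyl 1 0 0\<close>] ys by simp
    qed
    show "\<forall>y s. y \<in> ball x0 (1/4) \<and> t0 < s \<and> s \<le> t0 + r\<^sup>2 \<and> w y s = u y s \<longrightarrow>
            strict_barrier_at (-1) (f_eps h \<gamma> \<beta> \<epsilon>) w y s"
      using arg_pos \<open>0 < k\<close> unfolding w_def c_def
      by (auto intro!: power_barrier_strict_supersolution)
  qed simp
  thus ?thesis by (simp add: w_def)
qed

lemma forward_bound:
  assumes r: "r < 1/4" and x: "dist x0 x < r" and t: "t0 \<le> t" "t < t0 + r\<^sup>2"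
  shows "u x t \<le> forward_constant \<theta> L \<beta> CARD('n) * (\<epsilon>\<^sup>2 + r\<^sup>2) powr (\<beta> / 2)"
proof -
  define c where "c = 2 * real CARD('n) + 1"
  define k where "k = 4 * (\<theta> powr (1 / \<beta>) + L) + 1"
  define \<alpha> where "\<alpha> = \<epsilon>\<^sup>2 - c * t0"
  have "0 < c" by (simp add: c_def)
  have "0 \<le> r" using x zero_le_dist[of x0 x] by linarith
  have "x \<in> cball x0 (1/4)" "t \<in> {t0..t0 + r\<^sup>2}" using x t r by auto
  hence "u x t < power_barrier (k powr \<beta>) \<beta> \<alpha> x0 x t"
    using forward_comparison[OF \<open>0 \<le> r\<close> r] by (simp add: k_def \<alpha>_def c_def)
  also have "\<dots> \<le> k powr \<beta> * ((c + 1) * (\<epsilon>\<^sup>2 + r\<^sup>2)) powr (\<beta> / 2)"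
  proof -
    have "(norm (x - x0))\<^sup>2 \<le> r\<^sup>2"
      using x by (intro power_mono) (auto simp: dist_norm norm_minus_commute)
    moreover have "c * t - c * t0 \<le> c * r\<^sup>2"
      using t \<open>0 < c\<close> mult_left_mono[of "t - t0" "r\<^sup>2" c] by (simp add: algebra_simps)
    moreover have "0 \<le> c * \<epsilon>\<^sup>2" using \<open>0 < c\<close> by simp
    moreover have "(c + 1) * (\<epsilon>\<^sup>2 + r\<^sup>2) = c * \<epsilon>\<^sup>2 + c * r\<^sup>2 + \<epsilon>\<^sup>2 + r\<^sup>2"
      by (simp add: algebra_simps)
    ultimately have le: "\<alpha> + c * t + (norm (x - x0))\<^sup>2 \<le> (c + 1) * (\<epsilon>\<^sup>2 + r\<^sup>2)"
      unfolding \<alpha>_def by linarith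
    have "c * t0 \<le> c * t" using t \<open>0 < c\<close> by simp
    hence "0 \<le> \<alpha> + c * t + (norm (x - x0))\<^sup>2"
      unfolding \<alpha>_def using zero_le_power2[of \<epsilon>] zero_le_power2[of "norm (x - x0)"] by linarith
    thus ?thesis
      using le beta_bounds unfolding power_barrier_def c_def[symmetric]
      by (intro mult_left_mono powr_mono2) auto
  qed
  also have "\<dots> = forward_constant \<theta> L \<beta> CARD('n) * (\<epsilon>\<^sup>2 + r\<^sup>2) powr (\<beta> / 2)"
    using \<open>0 < c\<close> by (simp add: forward_constant_def k_def c_def powr_mult add.commute)
  finally show ?thesis by simp
qed

end

locale backward_setting = small_at_base_point h \<gamma> \<beta> \<epsilon> u L \<theta> x0 t0
  for h \<gamma> \<beta> \<epsilon> and u :: "real^'n \<Rightarrow> real \<Rightarrow> real" and L \<theta> x0 t0 +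
  fixes x1 :: "real^'n" and t1 r \<rho> a c A B K :: real
  assumes x1: "dist x0 x1 < r" and t1: "t0 - r\<^sup>2 < t1" "t1 < t0"
    and \<rho>_def: "\<rho> = sqrt (\<epsilon>\<^sup>2 + r\<^sup>2)" and small_radius: "4 * a * \<rho> < 1"
    and a_def: "a = 2 * real CARD('n) + 3" and c_def: "c = 2 * real CARD('n) + 1"
    and A_def: "A = \<theta> + 4" and B_def: "B = 3 * (2 * (SUP s\<in>{0..1}. h s) + 1)"
    and K_def: "K = A * (1 + a) powr \<beta> + 2 * B * a"
begin

text \<open>Its argument vanishes on the lateral boundary \<open>|y - x\<^sub>1| = \<surd>a \<rho>\<close> at \<open>s = t\<^sub>1\<close> and is
  negative there at later times.\<close>
definition backward_barrier :: "real^'n \<Rightarrow> real \<Rightarrow> real" where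
  "backward_barrier y s = sub_barrier A B \<beta> \<epsilon> \<rho> (a * \<rho>\<^sup>2 + c * t1 - c * s - (norm (y - x1))\<^sup>2)"

lemma sup_h_nonneg: "0 \<le> (SUP s\<in>{0..1}. h s)"
  by (rule admissible_h_sup_nonneg[OF admissible])

lemma backward_constants: "5 \<le> a" "a = c + 2" "0 < c" "0 < A" "0 < B" "0 \<le> K"
  using theta sup_h_nonneg by (simp_all add: a_def c_def A_def B_def K_def)

lemma radius_bounds: "0 \<le> r" "\<epsilon> \<le> \<rho>" "r \<le> \<rho>" "0 < \<rho>" "r\<^sup>2 \<le> \<rho>\<^sup>2" "\<rho> \<le> a * \<rho>" "a * \<rho> < 1/4"
proof -
  show "0 \<le> r" using x1 zero_le_dist[of x0 x1] by linarith
  show "\<epsilon> \<le> \<rho>" "r \<le> \<rho>" unfolding \<rho>_def by (auto intro: real_le_rsqrt)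
  thus "0 < \<rho>" using eps by simp
  show "r\<^sup>2 \<le> \<rho>\<^sup>2" using \<open>0 \<le> r\<close> \<open>r \<le> \<rho>\<close> by (intro power_mono)
  show "\<rho> \<le> a * \<rho>" using backward_constants \<open>0 < \<rho>\<close> mult_right_mono[of 1 a \<rho>] by simp
  show "a * \<rho> < 1/4" using small_radius by (simp add: mult.assoc)
qed

lemma backward_cylinder_subset: "cball x1 (sqrt a * \<rho>) \<times> {t1..t1 + \<rho>\<^sup>2} \<subseteq> cyl 1 0 0"
proof
  fix q assume "q \<in> cball x1 (sqrt a * \<rho>) \<times> {t1..t1 + \<rho>\<^sup>2}"
  then obtain y s where q: "q = (y, s)" "dist x1 y \<le> sqrt a * \<rho>" "t1 \<le> s" "s \<le> t1 + \<rho>\<^sup>2" by auto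
  have "sqrt a \<le> a" using backward_constants by (intro real_le_lsqrt) (auto simp: power2_eq_square)
  hence "sqrt a * \<rho> \<le> a * \<rho>" using radius_bounds by (simp add: mult_right_mono)
  moreover have "norm y \<le> norm x0 + dist x0 x1 + dist x1 y"
    using norm_triangle_ineq[of x0 "y - x0"] dist_triangle[of x0 y x1]
    by (simp add: dist_norm norm_minus_commute)
  ultimately have "norm y < 1" using q(2) base_bounds(1) x1 radius_bounds by linarith
  moreover have "\<rho> < 1/4" using radius_bounds(6,7) by linarith
  hence "\<rho>\<^sup>2 < 1/16"
    using radius_bounds(4) power_strict_mono[of \<rho> "1/4" 2] by (simp add: power2_eq_square)
  moreover have "-1 < s" "s < 1" using q(3,4) base_bounds t1 radius_bounds(5) \<open>\<rho>\<^sup>2 < 1/16\<close> by linarith+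
  ultimately show "q \<in> cyl 1 0 0" using q(1) by (simp add: mem_cyl_iff)
qed

lemma backward_barrier_initial:
  assumes big: "(K powr (1 / \<beta>) + L * sqrt a) * \<rho> < u x1 t1 powr (1 / \<beta>)"
    and y: "y \<in> cball x1 (sqrt a * \<rho>)"
  shows "backward_barrier y t1 < u y t1"
proof -
  have "(y, t1) \<in> cyl 1 0 0" "(x1, t1) \<in> cyl 1 0 0"
    using backward_cylinder_subset y radius_bounds by auto
  have "backward_barrier y t1 \<le> K * \<rho> powr \<beta>"
  proof -
    have "(norm (y - x1))\<^sup>2 \<le> (sqrt a * \<rho>)\<^sup>2"
      using y by (intro power_mono) (auto simp: dist_norm norm_minus_commute)
    hence "a * \<rho>\<^sup>2 - (norm (y - x1))\<^sup>2 \<le> a * \<rho>\<^sup>2" by simp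
    from sub_barrier_le[OF beta_bounds(1) eps radius_bounds(2) backward_constants(4,5) _ this]
      backward_constants(1)
    show ?thesis by (simp add: backward_barrier_def K_def)
  qed
  also have "\<dots> < u y t1"
  proof -
    have "u x1 t1 powr (1 / \<beta>) \<le> u y t1 powr (1 / \<beta>) + L * dist y x1"
      using root_lipschitz[of y x1 t1] \<open>(y, t1) \<in> cyl 1 0 0\<close> \<open>(x1, t1) \<in> cyl 1 0 0\<close>
      by (simp add: mem_cyl_iff)
    moreover have "L * dist y x1 \<le> L * sqrt a * \<rho>"
      using y L_nonneg by (simp add: dist_commute mult_left_mono mult.assoc)
    ultimately have "K powr (1 / \<beta>) * \<rho> < u y t1 powr (1 / \<beta>)" using big by (simp add: algebra_simps)
    from powr_less_of_less_root[OF _ _ _ this] beta_bounds radius_bounds(4) backward_constants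
      nonneg[OF \<open>(y, t1) \<in> cyl 1 0 0\<close>]
    show ?thesis by (simp add: powr_mult powr_powr)
  qed
  finally show ?thesis .
qed

lemma backward_comparison:
  assumes big: "(K powr (1 / \<beta>) + L * sqrt a) * \<rho> < u x1 t1 powr (1 / \<beta>)"
  shows "\<forall>y\<in>cball x1 (sqrt a * \<rho>). \<forall>s\<in>{t1..t1 + \<rho>\<^sup>2}. 1 * (backward_barrier y s - u y s) < 0"
proof (rule comparison_principle[OF solution backward_cylinder_subset])
  show "continuous_on (cball x1 (sqrt a * \<rho>) \<times> {t1..t1 + \<rho>\<^sup>2}) (\<lambda>(y, s). backward_barrier y s)"
    unfolding backward_barrier_def case_prod_beta
    by (rule continuous_on_compose2[OF continuous_on_sub_barrier]) (auto intro!: continuous_intros)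
  show "\<forall>y\<in>cball x1 (sqrt a * \<rho>). 1 * (backward_barrier y t1 - u y t1) < 0"
    using backward_barrier_initial[OF big] by simp
  have nonneg': "0 \<le> u y s" if "(y, s) \<in> cball x1 (sqrt a * \<rho>) \<times> {t1..t1 + \<rho>\<^sup>2}" for y s
    using nonneg backward_cylinder_subset that by blast
  have negative: "backward_barrier y s < 0" if "a * \<rho>\<^sup>2 + c * t1 - c * s - (norm (y - x1))\<^sup>2 < 0" for y s
    unfolding backward_barrier_def using that beta_bounds backward_constants eps radius_bounds
    by (intro sub_barrier_neg) auto
  show "\<forall>y s. dist x1 y = sqrt a * \<rho> \<and> s \<in> {t1..t1 + \<rho>\<^sup>2} \<longrightarrow> 1 * (backward_barrier y s - u y s) < 0"
  proof (intro allI impI)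
    fix y s assume ys: "dist x1 y = sqrt a * \<rho> \<and> s \<in> {t1..t1 + \<rho>\<^sup>2}"
    show "1 * (backward_barrier y s - u y s) < 0"
    proof (cases "s = t1")
      case True
      thus ?thesis using backward_barrier_initial[OF big] ys by simp
    next
      case False
      hence "c * t1 < c * s" using ys backward_constants by auto
      moreover have "(norm (y - x1))\<^sup>2 = a * \<rho>\<^sup>2"
        using ys backward_constants radius_bounds
        by (simp add: dist_norm norm_minus_commute power_mult_distrib)
      ultimately have "backward_barrier y s < 0" by (intro negative) simp
      moreover have "0 \<le> u y s" using nonneg'[where y = y and s = s] ys by simp
      ultimately show ?thesis by simp
    qed
  qed
  show "\<forall>y s. y \<in> ball x1 (sqrt a * \<rho>) \<and> t1 < s \<and> s \<le> t1 + \<rho>\<^sup>2 \<and> backward_barrier y s = u y s \<longrightarrow>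
          strict_barrier_at 1 (f_eps h \<gamma> \<beta> \<epsilon>) backward_barrier y s"
  proof (intro allI impI)
    fix y s assume ys: "y \<in> ball x1 (sqrt a * \<rho>) \<and> t1 < s \<and> s \<le> t1 + \<rho>\<^sup>2 \<and> backward_barrier y s = u y s"
    define z where "z = a * \<rho>\<^sup>2 + c * t1 - c * s - (norm (y - x1))\<^sup>2"
    have "0 \<le> z" using negative[where y = y and s = s] nonneg'[where y = y and s = s] ys
      by (force simp: z_def)
    moreover have "\<rho>\<^sup>2 \<le> z" if "norm (y - x1) < \<rho> / 2"
    proof -
      have "(norm (y - x1))\<^sup>2 \<le> (\<rho> / 2)\<^sup>2" using that by (intro power_mono) auto
      moreover have "c * s - c * t1 \<le> c * \<rho>\<^sup>2"
        using ys backward_constants mult_left_mono[of "s - t1" "\<rho>\<^sup>2" c] by (simp add: algebra_simps)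
      moreover have "a * \<rho>\<^sup>2 = c * \<rho>\<^sup>2 + 2 * \<rho>\<^sup>2" "(\<rho> / 2)\<^sup>2 = \<rho>\<^sup>2 / 4"
        using backward_constants by (simp_all add: algebra_simps power_divide)
      ultimately show ?thesis using zero_le_power2[of \<rho>] unfolding z_def by linarith
    qed
    ultimately show "strict_barrier_at 1 (f_eps h \<gamma> \<beta> \<epsilon>) backward_barrier y s"
      unfolding backward_barrier_def[abs_def] z_def unfolding c_def using radius_bounds sup_h_nonneg theta
      by (intro sub_barrier_strict_subsolution) (auto simp: A_def B_def)
  qed
qed simp

lemma backward_root_bound: "u x1 t1 powr (1 / \<beta>) \<le> (K powr (1 / \<beta>) + L * sqrt a) * \<rho>"
proof (rule ccontr)
  assume "\<not> ?thesis"
  hence "\<forall>y\<in>cball x1 (sqrt a * \<rho>). \<forall>s\<in>{t1..t1 + \<rho>\<^sup>2}. 1 * (backward_barrier y s - u y s) < 0"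
    by (intro backward_comparison) simp
  moreover have "x0 \<in> cball x1 (sqrt a * \<rho>)"
  proof -
    have "1 \<le> sqrt a" using backward_constants by simp
    hence "\<rho> \<le> sqrt a * \<rho>" using radius_bounds mult_right_mono[of 1 "sqrt a" \<rho>] by simp
    hence "dist x1 x0 < sqrt a * \<rho>" using x1 radius_bounds(3) by (simp add: dist_commute)
    thus ?thesis by simp
  qed
  moreover have "t0 \<le> t1 + \<rho>\<^sup>2" using t1 radius_bounds(5) by linarith
  hence "t0 \<in> {t1..t1 + \<rho>\<^sup>2}" using t1 by simp
  ultimately have "backward_barrier x0 t0 < u x0 t0" by auto
  moreover have "A * \<epsilon> powr \<beta> \<le> backward_barrier x0 t0"
  proof -
    have "(norm (x0 - x1))\<^sup>2 \<le> \<rho>\<^sup>2"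
      using x1 radius_bounds by (intro power_mono) (auto simp: dist_norm norm_minus_commute)
    moreover have "t0 - t1 \<le> \<rho>\<^sup>2" using t1 radius_bounds(5) by linarith
    hence "c * t0 - c * t1 \<le> c * \<rho>\<^sup>2"
      using backward_constants(3) mult_left_mono[of "t0 - t1" "\<rho>\<^sup>2" c] by (simp add: algebra_simps)
    ultimately have "\<rho>\<^sup>2 \<le> a * \<rho>\<^sup>2 + c * t1 - c * t0 - (norm (x0 - x1))\<^sup>2"
      using backward_constants by (simp add: algebra_simps)
    from sub_barrier_ge[OF beta_bounds(1) eps radius_bounds(2) _ _ this] backward_constants(4,5)
    show ?thesis by (simp add: backward_barrier_def)
  qed
  moreover have "\<theta> * \<epsilon> powr \<beta> < A * \<epsilon> powr \<beta>" using eps by (simp add: A_def)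
  ultimately show False using small by simp
qed

end

context small_at_base_point
begin

lemma backward_bound:
  assumes r: "r < 1/4" and x1: "dist x0 x1 < r" and t1: "t0 - r\<^sup>2 < t1" "t1 < t0"
  shows "u x1 t1 \<le> backward_constant \<theta> L (SUP s\<in>{0..1}. h s) \<beta> CARD('n) * (\<epsilon>\<^sup>2 + r\<^sup>2) powr (\<beta> / 2)"
proof -
  define a where "a = 2 * real CARD('n) + 3"
  define K where "K = (\<theta> + 4) * (1 + a) powr \<beta> + 6 * (2 * (SUP s\<in>{0..1}. h s) + 1) * a"
  define \<rho> where "\<rho> = sqrt (\<epsilon>\<^sup>2 + r\<^sup>2)"
  define C where "C = backward_constant \<theta> L (SUP s\<in>{0..1}. h s) \<beta> CARD('n)"
  have C: "C = max ((4 * a * L) powr \<beta>) ((K powr (1 / \<beta>) + L * sqrt a) powr \<beta>)"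
    by (simp add: C_def backward_constant_def Let_def a_def K_def)
  have "0 < \<rho>" using eps by (simp add: \<rho>_def add_pos_nonneg)
  have "0 \<le> K" "1 \<le> a"
    using theta admissible_h_sup_nonneg[OF admissible] by (simp_all add: K_def a_def)
  have "0 \<le> r" using x1 zero_le_dist[of x0 x1] by linarith
  have "(x1, t1) \<in> cyl 1 0 0"
  proof -
    have "norm x1 \<le> norm x0 + dist x0 x1"
      using norm_triangle_ineq[of x0 "x1 - x0"] by (simp add: dist_norm norm_minus_commute)
    moreover have "r\<^sup>2 < 1/4" using r \<open>0 \<le> r\<close> power_strict_mono[of r "1/4" 2] by (simp add: power2_eq_square)
    ultimately show ?thesis using base_bounds x1 r t1 by (simp add: mem_cyl_iff)
  qed
  have "u x1 t1 \<le> C * \<rho> powr \<beta>"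
  proof (cases "4 * a * \<rho> < 1")
    case True
    interpret bw: backward_setting h \<gamma> \<beta> \<epsilon> u L \<theta> x0 t0 x1 t1 r \<rho> a "2 * real CARD('n) + 1"
      "\<theta> + 4" "3 * (2 * (SUP s\<in>{0..1}. h s) + 1)" K
      by unfold_locales (use x1 t1 True in \<open>simp_all add: \<rho>_def a_def K_def\<close>)
    have "u x1 t1 \<le> ((K powr (1 / \<beta>) + L * sqrt a) * \<rho>) powr \<beta>"
      using bw.backward_root_bound beta_bounds nonneg[OF \<open>(x1, t1) \<in> cyl 1 0 0\<close>]
      by (intro le_powr_of_root_le) auto
    also have "\<dots> = (K powr (1 / \<beta>) + L * sqrt a) powr \<beta> * \<rho> powr \<beta>"
      using L_nonneg \<open>1 \<le> a\<close> \<open>0 < \<rho>\<close> by (simp add: powr_mult)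
    also have "\<dots> \<le> C * \<rho> powr \<beta>" by (simp add: C mult_right_mono)
    finally show ?thesis .
  next
    case False
    have "u x1 t1 \<le> L powr \<beta>"
      using root_bounded[OF \<open>(x1, t1) \<in> cyl 1 0 0\<close>] beta_bounds nonneg[OF \<open>(x1, t1) \<in> cyl 1 0 0\<close>]
      by (intro le_powr_of_root_le) auto
    also have "\<dots> \<le> (4 * a * L * \<rho>) powr \<beta>"
      using False L_nonneg beta_bounds mult_left_mono[of 1 "4 * a * \<rho>" L]
      by (intro powr_mono2) (auto simp: mult_ac)
    also have "\<dots> = (4 * a * L) powr \<beta> * \<rho> powr \<beta>"
      using L_nonneg \<open>1 \<le> a\<close> \<open>0 < \<rho>\<close> by (simp add: powr_mult)
    also have "\<dots> \<le> C * \<rho> powr \<beta>" by (simp add: C mult_right_mono)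
    finally show ?thesis .
  qed
  moreover have "\<rho> powr \<beta> = (\<epsilon>\<^sup>2 + r\<^sup>2) powr (\<beta> / 2)"
    by (simp add: \<rho>_def powr_half_sqrt[symmetric] powr_powr)
  ultimately show ?thesis by (simp add: C_def)
qed


lemma bound_on_cylinder:
  assumes r: "r < 1/4" and xt: "(x, t) \<in> cyl r x0 t0"
  shows "u x t \<le> max (forward_constant \<theta> L \<beta> CARD('n))
                      (backward_constant \<theta> L (SUP s\<in>{0..1}. h s) \<beta> CARD('n)) * (\<epsilon>\<^sup>2 + r\<^sup>2) powr (\<beta> / 2)"
proof (cases "t0 \<le> t")
  case True
  have "dist x0 x < r" using xt by (simp add: mem_cyl_iff)
  hence "0 < r" using zero_le_dist[of x0 x] by linarith
  with True xt r show ?thesis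
    using forward_bound[of r x t] by (simp add: mem_cyl_iff) (smt (verit) max.cobounded1 mult_right_mono powr_ge_zero)
next
  case False
  with xt r show ?thesis
    using backward_bound[of r x t] by (simp add: mem_cyl_iff) (smt (verit) max.cobounded2 mult_right_mono powr_ge_zero)
qed

end

lemma small_at_base_pointI:
  fixes u :: "real^'n \<Rightarrow> real \<Rightarrow> real"
  assumes params: "reaction_parameters h \<gamma> \<beta> \<epsilon>"
    and sol: "classical_solution (f_eps h \<gamma> \<beta> \<epsilon>) (cyl 1 0 0) u"
    and nonneg: "\<forall>(x,t)\<in>cyl 1 0 0. 0 \<le> u x t"
    and AB: "0 \<le> A" "0 \<le> B" "A + B \<le> Cc"
    and bound: "\<forall>(x,t)\<in>cyl 1 0 0. u x t powr (2 / \<beta>) \<le> A"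
    and grad: "\<forall>(x,t)\<in>cyl 1 0 0. \<forall>g. 0 < u x t \<and>
                 ((\<lambda>y. u y t powr (1 / \<beta>)) has_derivative (\<lambda>v. g \<bullet> v)) (at x) \<longrightarrow> (norm g)\<^sup>2 \<le> B"
    and \<theta>: "0 < \<theta>" and base: "(x0, t0) \<in> cyl (1/2) 0 0" and small: "u x0 t0 \<le> \<theta> * \<epsilon> powr \<beta>"
  shows "small_at_base_point h \<gamma> \<beta> \<epsilon> u (sqrt Cc) \<theta> x0 t0"
proof (rule small_at_base_point.intro[OF params small_at_base_point_axioms.intro])
  interpret reaction_parameters h \<gamma> \<beta> \<epsilon> by (rule params)
  show "u x t powr (1 / \<beta>) \<le> sqrt Cc" if "(x, t) \<in> cyl 1 0 0" for x t
  proof -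
    have "u x t powr (1 / \<beta>) = sqrt (u x t powr (2 / \<beta>))"
      by (simp add: powr_half_sqrt[symmetric] powr_powr)
    also have "\<dots> \<le> sqrt Cc" using bound AB that by auto
    finally show ?thesis .
  qed
  show "u z t powr (1 / \<beta>) \<le> u y t powr (1 / \<beta>) + sqrt Cc * dist y z"
    if "y \<in> ball 0 1" "z \<in> ball 0 1" "-1 < t" "t < 1" for y z t
  proof -
    have inQ: "(x, t) \<in> cyl 1 0 0" if "x \<in> ball 0 1" for x
      using that \<open>-1 < t\<close> \<open>t < 1\<close> by (simp add: mem_cyl_iff)
    have "u z t powr (1 / \<beta>) \<le> u y t powr (1 / \<beta>) + sqrt B * dist y z"
    proof (rule powr_lipschitz_in_space[OF sol convex_ball[of 0 1]])
      show "\<forall>x\<in>ball 0 1. 0 \<le> u x t" using bspec[OF nonneg inQ] by simp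
      show "\<forall>x\<in>ball 0 1. \<forall>g. 0 < u x t \<and> ((\<lambda>y. u y t powr (1 / \<beta>)) has_derivative (\<lambda>v. g \<bullet> v)) (at x)
              \<longrightarrow> (norm g)\<^sup>2 \<le> B"
        using bspec[OF grad inQ] by simp
    qed (use inQ that beta_bounds AB(2) in auto)
    also have "sqrt B * dist y z \<le> sqrt Cc * dist y z" using AB by (intro mult_right_mono) auto
    finally show ?thesis by simp
  qed
qed (use sol nonneg \<theta> base small in auto)


theorem lemma3p4:
  fixes \<gamma> \<theta> Cc M :: real
  assumes "0 \<le> \<gamma>" "\<gamma> \<le> 1" "\<theta> > 0" "Cc > 0"
  shows "\<exists>C>0. \<forall>h. admissible_h h \<and> (SUP s\<in>{0..1}. h s) = M \<longrightarrow>
     (\<forall>\<epsilon>>0. \<forall>u :: real^'n \<Rightarrow> real \<Rightarrow> real.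
        (let \<beta> = 2 / (2 - \<gamma>) in
          classical_solution (f_eps h \<gamma> \<beta> \<epsilon>) (cyl 1 0 0) u \<and>
          (\<forall>(x,t)\<in>cyl 1 0 0. u x t \<ge> 0) \<and>
          (\<exists>A B. A \<ge> 0 \<and> B \<ge> 0 \<and> A + B \<le> Cc \<and>
             (\<forall>(x,t)\<in>cyl 1 0 0. u x t powr (2 / \<beta>) \<le> A) \<and>
             (\<forall>(x,t)\<in>cyl 1 0 0. \<forall>g. u x t > 0 \<and>
                ((\<lambda>y. u y t powr (1 / \<beta>)) has_derivative (\<lambda>v. g \<bullet> v)) (at x)
                \<longrightarrow> (norm g)\<^sup>2 \<le> B))
          \<longrightarrow> (\<forall>r x0 t0. 0 < r \<and> r < 1/4 \<and> (x0, t0) \<in> cyl (1/2) 0 0 \<and>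
                 u x0 t0 \<le> \<theta> * \<epsilon> powr \<beta> \<longrightarrow>
                 (\<forall>(x,t)\<in>cyl r x0 t0. u x t \<le> C * (\<epsilon>\<^sup>2 + r\<^sup>2) powr (1 / (2 - \<gamma>))))))"
proof -
  define \<beta> where "\<beta> = 2 / (2 - \<gamma>)"
  define C where "C = max (forward_constant \<theta> (sqrt Cc) \<beta> CARD('n))
                          (backward_constant \<theta> (sqrt Cc) M \<beta> CARD('n)) + 1"
  have "0 < C"
    unfolding C_def forward_constant_def by (smt (verit) max.cobounded1 mult_nonneg_nonneg powr_ge_zero)
  have exponent: "1 / (2 - \<gamma>) = \<beta> / 2" using assms by (simp add: \<beta>_def field_simps)
  have "u x t \<le> C * (\<epsilon>\<^sup>2 + r\<^sup>2) powr (\<beta> / 2)"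
    if "admissible_h h" "(SUP s\<in>{0..1}. h s) = M" "0 < \<epsilon>"
      "classical_solution (f_eps h \<gamma> \<beta> \<epsilon>) (cyl 1 0 0) u" "\<forall>(x,t)\<in>cyl 1 0 0. 0 \<le> u x t"
      "0 \<le> A" "0 \<le> B" "A + B \<le> Cc" "\<forall>(x,t)\<in>cyl 1 0 0. u x t powr (2 / \<beta>) \<le> A"
      "\<forall>(x,t)\<in>cyl 1 0 0. \<forall>g. 0 < u x t \<and>
         ((\<lambda>y. u y t powr (1 / \<beta>)) has_derivative (\<lambda>v. g \<bullet> v)) (at x) \<longrightarrow> (norm g)\<^sup>2 \<le> B"
      "r < 1/4" "(x0, t0) \<in> cyl (1/2) 0 0" "u x0 t0 \<le> \<theta> * \<epsilon> powr \<beta>" "(x, t) \<in> cyl r x0 t0"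
    for h \<epsilon> A B r x0 t0 x t and u :: "real^'n \<Rightarrow> real \<Rightarrow> real"
  proof -
    have "reaction_parameters h \<gamma> \<beta> \<epsilon>"
      using that assms by unfold_locales (simp_all add: \<beta>_def)
    then interpret small_at_base_point h \<gamma> \<beta> \<epsilon> u "sqrt Cc" \<theta> x0 t0
      using that assms by (intro small_at_base_pointI) auto
    from bound_on_cylinder[of r x t] that show ?thesis
      unfolding C_def by (smt (verit) mult_right_mono powr_ge_zero)
  qed
  thus ?thesis
    unfolding Let_def \<beta>_def[symmetric] exponent using \<open>0 < C\<close> by (intro exI[of _ C]) fastforce
qed

end
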